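(* Let $p$ be a prime, let $A$ be a set with $|A|=p^2$, and let $f:A\to A$ be a bijection. Then there exists a binary operation $*$ on $A$ such that $(A,* )$ is a group isomorphic to $\mathbb{Z}_p\times\mathbb{Z}_p$ and $f$ is an automorphism of $(A,* )$ if and only if $f$ is the identity map or the multiset of cycle lengths of $f$ is one of the following: (a) $\frac{p^2-1}{d}$ cycles of length $d$ together with one cycle of length $1$, for some positive divisor $d$ of $p^2-1$; (b) $\frac{p-1}{d}$ cycles of length $pd$, $\frac{p-1}{d}$ cycles of length $d$, and one cycle of length $1$, for some positive divisor $d$ of $p-1$; (c) $\frac{(p-1)^2}{\mathrm{lcm}(d_1,d_2)}$ cycles of length $\mathrm{lcm}(d_1,d_2)$, $\frac{p-1}{d_1}$ cycles of length $d_1$, $\frac{p-1}{d_2}$ cycles of length $d_2$, and one cycle of length $1$, for some positive divisors $d_1,d_2$ of $p-1$ (where cycles listed with equal lengths are counted together).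
   Context: For a bijection $f$ of a finite set, a cycle is a sequence $a_1,\dots,a_m$ of distinct elements with $f(a_j)=a_{j+1}$ for $j<m$ and $f(a_m)=a_1$; its length is $m$; every element lies in exactly one cycle, and fixed points are cycles of length $1$. *)

theory Defs
  imports "HOL-Algebra.Elementary_Groups" "HOL-Library.Multiset" "HOL-Computational_Algebra.Primes"
begin

definition cycle_of :: "('a \<Rightarrow> 'a) \<Rightarrow> 'a \<Rightarrow> 'a set" where
  "cycle_of f x = {(f ^^ n) x | n. True}"

definition cycle_lengths :: "('a \<Rightarrow> 'a) \<Rightarrow> 'a set \<Rightarrow> nat multiset" where
  "cycle_lengths f A = image_mset card (mset_set (cycle_of f ` A))"

definition mk_group :: "'a set \<Rightarrow> ('a \<Rightarrow> 'a \<Rightarrow> 'a) \<Rightarrow> 'a \<Rightarrow> 'a monoid" where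
  "mk_group A op e = \<lparr>carrier = A, monoid.mult = op, one = e\<rparr>"

end

theory Submission
  imports Defs "HOL-Number_Theory.Residue_Primitive_Roots"
begin

text \<open>
  By transport of structure, a group structure on \<open>A\<close> isomorphic to \<open>Z_p x Z_p\<close> with \<open>f\<close> as an
  automorphism exists iff some automorphism \<open>g\<close> of \<open>Z_p x Z_p\<close> has the same cycle type as \<open>f\<close>,
  because permutations with equal cycle types are conjugate. The automorphisms of \<open>Z_p x Z_p\<close> are
  the invertible linear maps of the plane over \<open>F_p\<close>. If \<open>g\<close> has no eigenvector, then \<open>v\<close> and
  \<open>g v\<close> form a basis for every \<open>v \<noteq> 0\<close>, so all nonzero vectors have the same period: type (a),
  and multiplication by an element of order \<open>d\<close> in a field with \<open>p\<^sup>2\<close> elements realises each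
  such type. Otherwise \<open>g\<close> is conjugate to a diagonal map, whose periods are multiplicative orders
  of residues: type (c); or to a Jordan block, whose unipotent part contributes the factor \<open>p\<close>:
  type (b). The identity is type (c) with \<open>d1 = d2 = 1\<close>.
\<close>

section \<open>Cycles of a permutation of a finite set\<close>

definition period :: "('a \<Rightarrow> 'a) \<Rightarrow> 'a \<Rightarrow> nat" where
  "period f x = (LEAST n. 0 < n \<and> (f ^^ n) x = x)"

lemma self_in_cycle_of: "x \<in> cycle_of f x"
  unfolding cycle_of_def by (auto intro: exI[of _ 0])

lemma funpow_in_cycle_of: "(f ^^ n) x \<in> cycle_of f x"
  unfolding cycle_of_def by blast

lemma cycle_of_eq_range: "cycle_of f x = range (\<lambda>n. (f ^^ n) x)"
  unfolding cycle_of_def by auto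

locale finite_perm =
  fixes f :: "'a \<Rightarrow> 'a" and A :: "'a set"
  assumes bij: "bij_betw f A A" and finite: "finite A"
begin

lemma funpow_in: "x \<in> A \<Longrightarrow> (f ^^ n) x \<in> A"
  using bij_betw_funpow[OF bij] by (meson bij_betwE)

lemma funpow_diff_fixed:
  assumes x: "x \<in> A" and "i \<le> j" and eq: "(f ^^ i) x = (f ^^ j) x"
  shows "(f ^^ (j - i)) x = x"
proof -
  have "(f ^^ i) ((f ^^ (j - i)) x) = (f ^^ i) x"
    using \<open>i \<le> j\<close> eq by (metis funpow_add le_add_diff_inverse o_apply)
  then show ?thesis
    using bij_betw_imp_inj_on[OF bij_betw_funpow[OF bij, of i]] funpow_in x by (auto dest: inj_onD)
qed

lemma ex_funpow_fixed:
  assumes x: "x \<in> A" shows "\<exists>n>0. (f ^^ n) x = x"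
proof -
  have "\<not> inj_on (\<lambda>n. (f ^^ n) x) {0..card A}"
  proof
    assume "inj_on (\<lambda>n. (f ^^ n) x) {0..card A}"
    then have "card {0..card A} \<le> card A"
      using card_inj_on_le[OF _ _ finite] funpow_in[OF x] by blast
    then show False by simp
  qed
  then obtain i j where "i < j" "(f ^^ i) x = (f ^^ j) x"
    unfolding inj_on_def by (metis linorder_neqE_nat)
  then show ?thesis
    using funpow_diff_fixed[OF x] by (intro exI[of _ "j - i"]) auto
qed

lemma period_pos: "x \<in> A \<Longrightarrow> 0 < period f x"
  and funpow_period: "x \<in> A \<Longrightarrow> (f ^^ period f x) x = x"
  using LeastI_ex[OF ex_funpow_fixed] unfolding period_def by auto

lemma funpow_mult_period: "x \<in> A \<Longrightarrow> (f ^^ (period f x * k)) x = x"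
  by (induction k) (simp_all add: funpow_add funpow_period del: funpow.simps(2))

lemma funpow_mod_period:
  assumes x: "x \<in> A" shows "(f ^^ n) x = (f ^^ (n mod period f x)) x"
proof -
  have "(f ^^ n) x = (f ^^ (n mod period f x)) ((f ^^ (period f x * (n div period f x))) x)"
    by (metis comp_apply funpow_add mod_mult_div_eq mult.commute)
  then show ?thesis using funpow_mult_period[OF x] by simp
qed

lemma funpow_fixed_iff: "x \<in> A \<Longrightarrow> (f ^^ n) x = x \<longleftrightarrow> period f x dvd n"
proof
  assume x: "x \<in> A" and "(f ^^ n) x = x"
  then have "(f ^^ (n mod period f x)) x = x" using funpow_mod_period[OF x, of n] by simp
  then have "n mod period f x = 0"
    using not_less_Least[of "n mod period f x" "\<lambda>n. 0 < n \<and> (f ^^ n) x = x"] period_pos[OF x]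
    unfolding period_def by (meson mod_less_divisor neq0_conv)
  then show "period f x dvd n" by auto
qed (auto simp: funpow_mult_period)

lemma funpow_eq_iff:
  assumes x: "x \<in> A" shows "(f ^^ i) x = (f ^^ j) x \<longleftrightarrow> i mod period f x = j mod period f x"
proof
  assume eq: "(f ^^ i) x = (f ^^ j) x"
  have "period f x dvd (j - i)" if "i \<le> j" "(f ^^ i) x = (f ^^ j) x" for i j
    using funpow_diff_fixed[OF x that] funpow_fixed_iff[OF x] by blast
  then show "i mod period f x = j mod period f x"
    using eq by (metis mod_eq_dvd_iff_nat nat_le_linear)
qed (metis funpow_mod_period[OF x])

lemma cycle_of_eq_image:
  assumes x: "x \<in> A" shows "cycle_of f x = (\<lambda>k. (f ^^ k) x) ` {..<period f x}"
proof -
  have "(f ^^ n) x \<in> (\<lambda>k. (f ^^ k) x) ` {..<period f x}" for n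
    using funpow_mod_period[OF x, of n] period_pos[OF x] by auto
  then show ?thesis unfolding cycle_of_def by auto
qed

lemma card_cycle_of: assumes x: "x \<in> A" shows "card (cycle_of f x) = period f x"
proof -
  have "inj_on (\<lambda>k. (f ^^ k) x) {..<period f x}"
    unfolding inj_on_def using funpow_eq_iff[OF x] by auto
  then show ?thesis using cycle_of_eq_image[OF x] card_image by fastforce
qed

lemma card_cycle_ofI:
  "x \<in> A \<Longrightarrow> (\<And>k. (f ^^ k) x = x \<longleftrightarrow> m dvd k) \<Longrightarrow> card (cycle_of f x) = m"
  using funpow_fixed_iff card_cycle_of by (metis dvd_antisym dvd_refl)

lemma cycle_of_subset: "x \<in> A \<Longrightarrow> cycle_of f x \<subseteq> A"
  unfolding cycle_of_def using funpow_in by auto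

lemma cycle_of_eq:
  assumes x: "x \<in> A" and y: "y \<in> cycle_of f x" shows "cycle_of f y = cycle_of f x"
proof -
  obtain k where k: "y = (f ^^ k) x" using y unfolding cycle_of_def by auto
  have fwd: "(f ^^ n) y = (f ^^ (n + k)) x" for n by (simp add: k funpow_add)
  have bwd: "(f ^^ n) x = (f ^^ (n + (period f x * k - k))) y" for n
  proof -
    have "k \<le> period f x * k" using period_pos[OF x] by simp
    then have "(f ^^ (n + (period f x * k - k))) y = (f ^^ (n + period f x * k)) x"
      unfolding fwd by (metis add.assoc le_add_diff_inverse2)
    also have "\<dots> = (f ^^ n) x" by (simp add: funpow_add funpow_mult_period[OF x])
    finally show ?thesis by simp
  qed
  have "cycle_of f y \<subseteq> cycle_of f x" unfolding cycle_of_def using fwd by blast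
  moreover have "cycle_of f x \<subseteq> cycle_of f y" unfolding cycle_of_def using bwd by blast
  ultimately show ?thesis by blast
qed

lemma cycle_of_disjoint:
  "x \<in> A \<Longrightarrow> y \<in> A \<Longrightarrow> cycle_of f x \<noteq> cycle_of f y \<Longrightarrow> cycle_of f x \<inter> cycle_of f y = {}"
  using cycle_of_eq by (metis disjoint_iff)

lemma finite_perm_subset:
  assumes "S \<subseteq> A" "f ` S \<subseteq> S" shows "finite_perm f S"
proof
  show fin: "finite S" using finite_subset[OF assms(1) finite] .
  have "inj_on f S" using bij_betw_imp_inj_on[OF bij] assms(1) by (rule inj_on_subset)
  then show "bij_betw f S S" using endo_inj_surj[OF fin assms(2)] by (simp add: bij_betw_def)
qed

lemma finite_perm_Diff:
  assumes S: "finite_perm f S" "S \<subseteq> A" shows "finite_perm f (A - S)"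
proof (rule finite_perm_subset)
  have "f ` S = S" using finite_perm.bij[OF S(1)] by (simp add: bij_betw_def)
  then show "f ` (A - S) \<subseteq> A - S"
    using bij S(2) by (auto simp: bij_betw_def inj_on_def)
qed auto

lemma finite_perm_cycle_of:
  assumes x: "x \<in> A" shows "finite_perm f (cycle_of f x)"
proof (rule finite_perm_subset)
  have "f y \<in> cycle_of f y" for y using funpow_in_cycle_of[of 1] by simp
  then show "f ` cycle_of f x \<subseteq> cycle_of f x" using cycle_of_eq[OF x] by blast
qed (rule cycle_of_subset[OF x])

lemma card_eq_card_cycles_mult:
  assumes m: "\<And>x. x \<in> A \<Longrightarrow> card (cycle_of f x) = m"
  shows "card A = card (cycle_of f ` A) * m"
proof -
  have disj: "pairwise disjnt (cycle_of f ` A)"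
  proof (rule pairwiseI)
    fix C D assume "C \<in> cycle_of f ` A" "D \<in> cycle_of f ` A" "C \<noteq> D"
    then obtain x y where "x \<in> A" "y \<in> A" "C = cycle_of f x" "D = cycle_of f y" by blast
    with \<open>C \<noteq> D\<close> show "disjnt C D" using cycle_of_disjoint unfolding disjnt_def by simp
  qed
  have fin: "finite C" if C: "C \<in> cycle_of f ` A" for C
  proof -
    obtain x where "x \<in> A" "C = cycle_of f x" using C by blast
    then show ?thesis using finite_subset[OF cycle_of_subset finite] by simp
  qed
  have "\<Union> (cycle_of f ` A) = A"
  proof
    show "\<Union> (cycle_of f ` A) \<subseteq> A" by (rule UN_least) (rule cycle_of_subset)
    show "A \<subseteq> \<Union> (cycle_of f ` A)"
    proof
      fix x assume "x \<in> A"
      then show "x \<in> \<Union> (cycle_of f ` A)" using self_in_cycle_of[of x f] by (rule UN_I)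
    qed
  qed
  then have "card A = sum card (cycle_of f ` A)"
    using card_Union_disjoint[OF disj fin] by simp
  also have "\<dots> = sum (\<lambda>_. m) (cycle_of f ` A)" by (rule sum.cong) (auto simp: m)
  also have "\<dots> = card (cycle_of f ` A) * m" by simp
  finally show ?thesis .
qed

lemma cycle_length_dvd_card:
  "(\<And>x. x \<in> A \<Longrightarrow> card (cycle_of f x) = m) \<Longrightarrow> m dvd card A"
  using card_eq_card_cycles_mult by simp

lemma cycle_lengths_const:
  assumes m: "\<And>x. x \<in> A \<Longrightarrow> card (cycle_of f x) = m"
  shows "cycle_lengths f A = replicate_mset (card A div m) m"
proof -
  have "cycle_lengths f A = image_mset (\<lambda>_. m) (mset_set (cycle_of f ` A))"
    unfolding cycle_lengths_def using m finite by (intro image_mset_cong) auto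
  then have "cycle_lengths f A = replicate_mset (card (cycle_of f ` A)) m"
    by (simp add: image_mset_const_eq)
  moreover have "0 < m" if "A \<noteq> {}"
  proof -
    obtain x where "x \<in> A" using \<open>A \<noteq> {}\<close> by blast
    then show ?thesis using m card_cycle_of period_pos by metis
  qed
  ultimately show ?thesis
    using card_eq_card_cycles_mult[OF m] by (cases "A = {}") (simp_all add: cycle_lengths_def)
qed

lemma cycle_lengths_const_on:
  assumes "S \<subseteq> A" "f ` S \<subseteq> S" "\<And>x. x \<in> S \<Longrightarrow> card (cycle_of f x) = m"
  shows "finite_perm f S" "cycle_lengths f S = replicate_mset (card S div m) m"
  using finite_perm_subset[OF assms(1,2)] finite_perm.cycle_lengths_const assms(3) by blast+

end

lemma finite_perm_Un:
  assumes "finite_perm f S" "finite_perm f T" "S \<inter> T = {}"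
  shows "finite_perm f (S \<union> T)"
proof
  show "bij_betw f (S \<union> T) (S \<union> T)"
    using finite_perm.bij[OF assms(1)] finite_perm.bij[OF assms(2)] assms(3)
    by (rule bij_betw_combine)
  show "finite (S \<union> T)" using finite_perm.finite[OF assms(1)] finite_perm.finite[OF assms(2)] by simp
qed

lemma cycle_lengths_Un:
  assumes S: "finite_perm f S" and T: "finite_perm f T" and "S \<inter> T = {}"
  shows "cycle_lengths f (S \<union> T) = cycle_lengths f S + cycle_lengths f T"
proof -
  have "cycle_of f x \<noteq> cycle_of f y" if "x \<in> S" "y \<in> T" for x y
    using finite_perm.cycle_of_subset[OF S \<open>x \<in> S\<close>] self_in_cycle_of[of y f] that assms(3)
    by blast
  then have "cycle_of f ` S \<inter> cycle_of f ` T = {}" by blast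
  then show ?thesis
    using finite_perm.finite[OF S] finite_perm.finite[OF T]
    unfolding cycle_lengths_def image_Un by (simp add: mset_set_Union)
qed

context finite_perm
begin

lemma cycle_lengths_split:
  assumes "finite_perm f S" "S \<subseteq> A"
  shows "cycle_lengths f A = cycle_lengths f S + cycle_lengths f (A - S)"
proof -
  have "A = S \<union> (A - S)" using assms(2) by blast
  then show ?thesis using cycle_lengths_Un[OF assms(1) finite_perm_Diff[OF assms]] by simp
qed

lemma cycle_lengths_cycle_of:
  assumes x: "x \<in> A" shows "cycle_lengths f (cycle_of f x) = {#card (cycle_of f x)#}"
proof -
  have "cycle_of f ` cycle_of f x = {cycle_of f x}"
  proof
    show "cycle_of f ` cycle_of f x \<subseteq> {cycle_of f x}"
      using cycle_of_eq[OF x] by (simp add: image_subset_iff)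
    show "{cycle_of f x} \<subseteq> cycle_of f ` cycle_of f x"
      using self_in_cycle_of[of x f] by simp
  qed
  then show ?thesis unfolding cycle_lengths_def by simp
qed

lemma cycle_lengths_remove_cycle:
  assumes x: "x \<in> A"
  shows "cycle_lengths f A = {#card (cycle_of f x)#} + cycle_lengths f (A - cycle_of f x)"
  using cycle_lengths_split[OF finite_perm_cycle_of[OF x] cycle_of_subset[OF x]]
    cycle_lengths_cycle_of[OF x] by simp

lemma cycle_lengths_id:
  assumes "\<And>x. x \<in> A \<Longrightarrow> f x = x" shows "cycle_lengths f A = replicate_mset (card A) 1"
proof -
  have "(f ^^ n) x = x" if "x \<in> A" for x n using assms that by (induction n) auto
  then have "card (cycle_of f x) = 1" if "x \<in> A" for x
    using that by (intro card_cycle_ofI) auto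
  then show ?thesis using cycle_lengths_const by simp
qed

end

lemma cycle_lengths_conj:
  assumes F: "finite_perm f A" and h: "bij_betw h A B"
    and comm: "\<And>x. x \<in> A \<Longrightarrow> h (f x) = g (h x)"
  shows "cycle_lengths g B = cycle_lengths f A"
proof -
  interpret finite_perm f A by fact
  have "(g ^^ n) (h x) = h ((f ^^ n) x)" if "x \<in> A" for x n
    using that by (induction n) (auto simp: comm funpow_in)
  then have cyc: "cycle_of g (h x) = h ` cycle_of f x" if "x \<in> A" for x
    unfolding cycle_of_eq_range image_image using that by simp
  have "B = h ` A" using h by (simp add: bij_betw_def)
  then have "cycle_of g ` B = (\<lambda>x. cycle_of g (h x)) ` A" by (simp add: image_image)
  also have "\<dots> = image h ` (cycle_of f ` A)"
    unfolding image_image by (rule image_cong) (simp_all add: cyc)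
  finally have "cycle_of g ` B = image h ` (cycle_of f ` A)" .
  moreover have "inj_on (image h) (cycle_of f ` A)"
    using inj_on_image_Pow[of h A] h cycle_of_subset unfolding bij_betw_def
    by (meson PowI image_subsetI inj_on_subset)
  ultimately have "mset_set (cycle_of g ` B) = image_mset (image h) (mset_set (cycle_of f ` A))"
    by (simp add: image_mset_mset_set)
  then have "cycle_lengths g B = image_mset (card \<circ> image h) (mset_set (cycle_of f ` A))"
    unfolding cycle_lengths_def by (simp add: multiset.map_comp)
  also have "\<dots> = cycle_lengths f A"
    unfolding cycle_lengths_def
  proof (intro image_mset_cong)
    fix C assume "C \<in># mset_set (cycle_of f ` A)"
    then obtain x where "x \<in> A" "C = cycle_of f x" using finite by auto
    then have "inj_on h C" using h cycle_of_subset unfolding bij_betw_def by (metis inj_on_subset)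
    then show "(card \<circ> image h) C = card C" by (simp add: card_image)
  qed
  finally show ?thesis .
qed

lemma conj_cycle_of:
  assumes F: "finite_perm f A" and G: "finite_perm g B" and x: "x \<in> A" and y: "y \<in> B"
    and eq: "card (cycle_of f x) = card (cycle_of g y)"
  obtains h where "bij_betw h (cycle_of f x) (cycle_of g y)"
    and "\<And>z. z \<in> cycle_of f x \<Longrightarrow> h (f z) = g (h z)"
proof -
  interpret F: finite_perm f A by fact
  interpret G: finite_perm g B by fact
  define h where "h z = (g ^^ (SOME k. z = (f ^^ k) x)) y" for z
  have h: "h ((f ^^ k) x) = (g ^^ k) y" for k
  proof -
    define k' where "k' = (SOME k'. (f ^^ k) x = (f ^^ k') x)"
    have "(f ^^ k) x = (f ^^ k') x" unfolding k'_def by (rule someI[of _ k]) simp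
    then have "(g ^^ k') y = (g ^^ k) y"
      using F.funpow_eq_iff[OF x] G.funpow_eq_iff[OF y] eq F.card_cycle_of[OF x]
        G.card_cycle_of[OF y] by simp
    then show ?thesis unfolding h_def k'_def by simp
  qed
  have "h ` cycle_of f x = cycle_of g y"
    unfolding cycle_of_eq_range image_image h ..
  moreover have "finite (cycle_of f x)"
    using finite_subset[OF F.cycle_of_subset[OF x] F.finite] .
  ultimately have "bij_betw h (cycle_of f x) (cycle_of g y)"
    using eq by (simp add: bij_betw_def eq_card_imp_inj_on)
  moreover have "h (f z) = g (h z)" if z: "z \<in> cycle_of f x" for z
  proof -
    obtain k where "z = (f ^^ k) x" using z unfolding cycle_of_def by blast
    then show ?thesis using h[of k] h[of "Suc k"] by simp
  qed
  ultimately show ?thesis using that by blast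
qed

lemma conj_Un:
  assumes S: "finite_perm f S" and T: "finite_perm f T"
    and h1: "bij_betw h1 S S'" "\<And>x. x \<in> S \<Longrightarrow> h1 (f x) = g (h1 x)"
    and h2: "bij_betw h2 T T'" "\<And>x. x \<in> T \<Longrightarrow> h2 (f x) = g (h2 x)"
    and disj: "S \<inter> T = {}" "S' \<inter> T' = {}"
  shows "\<exists>h. bij_betw h (S \<union> T) (S' \<union> T') \<and> (\<forall>x\<in>S \<union> T. h (f x) = g (h x))"
proof -
  define h where "h x = (if x \<in> S then h1 x else h2 x)" for x
  have "bij_betw h S S'"
    using h1(1) by (rule bij_betw_cong[THEN iffD1, rotated]) (simp add: h_def)
  moreover have "bij_betw h T T'"
    using h2(1) by (rule bij_betw_cong[THEN iffD1, rotated]) (use disj(1) in \<open>auto simp: h_def\<close>)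
  ultimately have "bij_betw h (S \<union> T) (S' \<union> T')" using disj(2) by (rule bij_betw_combine)
  moreover have "h (f x) = g (h x)" if x: "x \<in> S \<union> T" for x
  proof (cases "x \<in> S")
    case True
    then have "f x \<in> S" using finite_perm.bij[OF S] by (meson bij_betwE)
    with True show ?thesis using h1(2) by (simp add: h_def)
  next
    case False
    with x have "x \<in> T" by simp
    then have "f x \<in> T" using finite_perm.bij[OF T] by (meson bij_betwE)
    then have "f x \<notin> S" using disj(1) by blast
    with False \<open>x \<in> T\<close> show ?thesis using h2(2) by (simp add: h_def)
  qed
  ultimately show ?thesis by blast
qed

lemma conj_if_cycle_lengths_eq:
  assumes "finite_perm f A" "finite_perm g B" "cycle_lengths f A = cycle_lengths g B"
  shows "\<exists>h. bij_betw h A B \<and> (\<forall>x\<in>A. h (f x) = g (h x))"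
  using assms
proof (induction "card A" arbitrary: A B rule: less_induct)
  case less
  interpret F: finite_perm f A by fact
  interpret G: finite_perm g B by fact
  show ?case
  proof (cases "A = {}")
    case True
    then have "cycle_of g ` B = {}"
      using less.prems(3) G.finite by (simp add: cycle_lengths_def mset_set_empty_iff)
    then show ?thesis using True by (simp add: bij_betw_def)
  next
    case False
    then obtain x where x: "x \<in> A" by blast
    define C where "C = cycle_of f x"
    have "card C \<in># cycle_lengths f A"
      unfolding cycle_lengths_def C_def using x F.finite by simp
    then have "card C \<in># cycle_lengths g B" using less.prems(3) by simp
    then obtain y where y: "y \<in> B" and card_eq: "card (cycle_of g y) = card C"
      unfolding cycle_lengths_def using G.finite by auto
    define D where "D = cycle_of g y"
    obtain hC where hC: "bij_betw hC C D" "\<And>z. z \<in> C \<Longrightarrow> hC (f z) = g (hC z)"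
      using conj_cycle_of[OF less.prems(1,2) x y] card_eq unfolding C_def D_def by metis
    have C: "finite_perm f C" "C \<subseteq> A"
      using F.finite_perm_cycle_of[OF x] F.cycle_of_subset[OF x] by (simp_all add: C_def)
    have D: "finite_perm g D" "D \<subseteq> B"
      using G.finite_perm_cycle_of[OF y] G.cycle_of_subset[OF y] by (simp_all add: D_def)
    have "cycle_lengths f (A - C) = cycle_lengths g (B - D)"
      using F.cycle_lengths_remove_cycle[OF x] G.cycle_lengths_remove_cycle[OF y] less.prems(3)
        card_eq by (simp add: C_def D_def)
    moreover have "card (A - C) < card A"
      using x self_in_cycle_of[of x f] F.finite C_def by (intro psubset_card_mono) auto
    ultimately obtain h' where h': "bij_betw h' (A - C) (B - D)" "\<forall>z\<in>A - C. h' (f z) = g (h' z)"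
      using less.hyps F.finite_perm_Diff[OF C] G.finite_perm_Diff[OF D] by blast
    have "\<exists>h. bij_betw h (C \<union> (A - C)) (D \<union> (B - D)) \<and> (\<forall>z\<in>C \<union> (A - C). h (f z) = g (h z))"
      by (rule conj_Un[OF C(1) F.finite_perm_Diff[OF C] hC h'(1)]) (use h'(2) in auto)
    moreover have "C \<union> (A - C) = A" "D \<union> (B - D) = B" using C(2) D(2) by auto
    ultimately show ?thesis by simp
  qed
qed

section \<open>Transport of group structure\<close>

lemma carrier_mk_group [simp]: "carrier (mk_group A op e) = A"
  and mult_mk_group [simp]: "x \<otimes>\<^bsub>mk_group A op e\<^esub> y = op x y"
  and one_mk_group [simp]: "\<one>\<^bsub>mk_group A op e\<^esub> = e"
  by (simp_all add: mk_group_def)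

lemma group_transport:
  assumes H: "group H" and h: "bij_betw h A (carrier H)"
  obtains op e where "group (mk_group A op e)" and "h \<in> iso (mk_group A op e) H"
proof -
  interpret H: group H by fact
  define op where "op x y = inv_into A h (h x \<otimes>\<^bsub>H\<^esub> h y)" for x y
  define e where "e = inv_into A h \<one>\<^bsub>H\<^esub>"
  have hA: "x \<in> A \<Longrightarrow> h x \<in> carrier H" for x using h bij_betwE by blast
  have invA: "y \<in> carrier H \<Longrightarrow> inv_into A h y \<in> A" for y
    using h by (metis bij_betw_def inv_into_into)
  have h_inv: "y \<in> carrier H \<Longrightarrow> h (inv_into A h y) = y" for y
    using h by (metis bij_betw_def f_inv_into_f)
  have h_eqD: "x \<in> A \<Longrightarrow> y \<in> A \<Longrightarrow> h x = h y \<Longrightarrow> x = y" for x y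
    using h by (metis bij_betw_def inj_onD)
  have op_closed: "x \<in> A \<Longrightarrow> y \<in> A \<Longrightarrow> op x y \<in> A" for x y
    by (simp add: op_def invA hA)
  have h_op: "x \<in> A \<Longrightarrow> y \<in> A \<Longrightarrow> h (op x y) = h x \<otimes>\<^bsub>H\<^esub> h y" for x y
    by (simp add: op_def h_inv hA)
  have e_closed: "e \<in> A" by (simp add: e_def invA)
  have h_e: "h e = \<one>\<^bsub>H\<^esub>" by (simp add: e_def h_inv)
  have "group (mk_group A op e)"
  proof (rule groupI)
    fix x y z assume "x \<in> carrier (mk_group A op e)" "y \<in> carrier (mk_group A op e)"
      "z \<in> carrier (mk_group A op e)"
    then have xyz: "x \<in> A" "y \<in> A" "z \<in> A" by simp_all
    have "op (op x y) z = op x (op y z)"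
      by (rule h_eqD) (simp_all add: xyz op_closed h_op hA H.m_assoc)
    then show "x \<otimes>\<^bsub>mk_group A op e\<^esub> y \<otimes>\<^bsub>mk_group A op e\<^esub> z =
        x \<otimes>\<^bsub>mk_group A op e\<^esub> (y \<otimes>\<^bsub>mk_group A op e\<^esub> z)" by simp
  next
    fix x assume "x \<in> carrier (mk_group A op e)"
    then have x: "x \<in> A" by simp
    have "op e x = x" by (rule h_eqD) (simp_all add: x e_closed op_closed h_op h_e hA)
    then show "\<one>\<^bsub>mk_group A op e\<^esub> \<otimes>\<^bsub>mk_group A op e\<^esub> x = x" by simp
    define y where "y = inv_into A h (inv\<^bsub>H\<^esub> (h x))"
    have y: "y \<in> A" "h y = inv\<^bsub>H\<^esub> (h x)" by (simp_all add: y_def x hA invA h_inv)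
    have "op y x = e" by (rule h_eqD) (simp_all add: x y e_closed op_closed h_op h_e hA)
    then show "\<exists>y\<in>carrier (mk_group A op e). y \<otimes>\<^bsub>mk_group A op e\<^esub> x = \<one>\<^bsub>mk_group A op e\<^esub>"
      using y(1) by auto
  qed (simp_all add: op_closed e_closed)
  moreover have "h \<in> iso (mk_group A op e) H"
  proof (rule isoI)
    show "h \<in> hom (mk_group A op e) H" unfolding hom_def using hA h_op by simp
    show "bij_betw h (carrier (mk_group A op e)) (carrier H)" using h by simp
  qed
  ultimately show ?thesis using that by blast
qed

lemma cycle_lengths_iso_conj:
  assumes G: "group G" "finite (carrier G)" and \<phi>: "\<phi> \<in> iso G H" and f: "f \<in> iso G G"
  shows "\<phi> \<circ> (f \<circ> inv_into (carrier G) \<phi>) \<in> iso H H"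
    and "cycle_lengths (\<phi> \<circ> (f \<circ> inv_into (carrier G) \<phi>)) (carrier H) = cycle_lengths f (carrier G)"
proof -
  show "\<phi> \<circ> (f \<circ> inv_into (carrier G) \<phi>) \<in> iso H H"
    using group.iso_set_sym[OF G(1) \<phi>] f \<phi> by (intro iso_set_trans)
  show "cycle_lengths (\<phi> \<circ> (f \<circ> inv_into (carrier G) \<phi>)) (carrier H) = cycle_lengths f (carrier G)"
  proof (rule cycle_lengths_conj)
    show "finite_perm f (carrier G)" using f G(2) by unfold_locales (simp add: iso_def)
    show "bij_betw \<phi> (carrier G) (carrier H)" using \<phi> by (simp add: iso_def)
    then show "\<phi> (f x) = (\<phi> \<circ> (f \<circ> inv_into (carrier G) \<phi>)) (\<phi> x)" if "x \<in> carrier G" for x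
      using that by (simp add: bij_betw_def inv_into_f_f)
  qed
qed

lemma group_with_automorphism_if_cycle_lengths_eq:
  assumes H: "group H" "finite (carrier H)" and A: "finite A" and f: "bij_betw f A A"
    and g: "g \<in> iso H H" "cycle_lengths g (carrier H) = cycle_lengths f A"
  obtains op e where "group (mk_group A op e)" "mk_group A op e \<cong> H"
    "f \<in> iso (mk_group A op e) (mk_group A op e)"
proof -
  have "finite_perm f A" using f A by unfold_locales
  moreover have "finite_perm g (carrier H)" using g(1) H(2) by unfold_locales (simp add: iso_def)
  ultimately obtain h where h: "bij_betw h A (carrier H)" "\<And>x. x \<in> A \<Longrightarrow> h (f x) = g (h x)"
    using conj_if_cycle_lengths_eq g(2) by metis
  obtain op e where G: "group (mk_group A op e)" and h_iso: "h \<in> iso (mk_group A op e) H"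
    using group_transport[OF H(1) h(1)] .
  have "inv_into A h \<in> iso H (mk_group A op e)"
    using group.iso_set_sym[OF G h_iso] by simp
  then have "inv_into A h \<circ> (g \<circ> h) \<in> iso (mk_group A op e) (mk_group A op e)"
    using g(1) h_iso by (intro iso_set_trans)
  moreover have "f x = (inv_into A h \<circ> (g \<circ> h)) x" if "x \<in> A" for x
  proof -
    have "f x \<in> A" using f that by (meson bij_betwE)
    then show ?thesis using h that by (simp add: bij_betw_def flip: h(2))
  qed
  ultimately have "f \<in> iso (mk_group A op e) (mk_group A op e)"
    by (rule group.iso_eq[OF G]) simp_all
  then show ?thesis using that G h_iso is_isoI by blast
qed

lemma ex_group_with_automorphism_iff:
  assumes H: "group H" "finite (carrier H)" and A: "finite A" and f: "bij_betw f A A"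
  shows "(\<exists>op e. group (mk_group A op e) \<and> mk_group A op e \<cong> H
            \<and> f \<in> iso (mk_group A op e) (mk_group A op e))
     \<longleftrightarrow> (\<exists>g \<in> iso H H. cycle_lengths g (carrier H) = cycle_lengths f A)"
proof
  assume "\<exists>op e. group (mk_group A op e) \<and> mk_group A op e \<cong> H
            \<and> f \<in> iso (mk_group A op e) (mk_group A op e)"
  then obtain op e \<phi> where G: "group (mk_group A op e)" and \<phi>: "\<phi> \<in> iso (mk_group A op e) H"
    and fG: "f \<in> iso (mk_group A op e) (mk_group A op e)"
    unfolding is_iso_def by blast
  then show "\<exists>g \<in> iso H H. cycle_lengths g (carrier H) = cycle_lengths f A"
    using cycle_lengths_iso_conj[OF G _ \<phi> fG] A by auto
next
  assume "\<exists>g \<in> iso H H. cycle_lengths g (carrier H) = cycle_lengths f A"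
  then show "\<exists>op e. group (mk_group A op e) \<and> mk_group A op e \<cong> H
            \<and> f \<in> iso (mk_group A op e) (mk_group A op e)"
    using group_with_automorphism_if_cycle_lengths_eq[OF H A f] by metis
qed

section \<open>The group \<open>\<int>\<^sub>p \<times> \<int>\<^sub>p\<close> as a plane\<close>

abbreviation Zp2 :: "nat \<Rightarrow> (int \<times> int) monoid" where
  "Zp2 p \<equiv> integer_mod_group p \<times>\<times> integer_mod_group p"

definition plane :: "nat \<Rightarrow> (int \<times> int) set" where
  "plane p = {0..<int p} \<times> {0..<int p}"

definition padd :: "nat \<Rightarrow> int \<times> int \<Rightarrow> int \<times> int \<Rightarrow> int \<times> int" where
  "padd p u w = ((fst u + fst w) mod int p, (snd u + snd w) mod int p)"

definition pscale :: "nat \<Rightarrow> int \<Rightarrow> int \<times> int \<Rightarrow> int \<times> int" where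
  "pscale p c u = ((c * fst u) mod int p, (c * snd u) mod int p)"

definition lincomb :: "nat \<Rightarrow> int \<times> int \<Rightarrow> int \<times> int \<Rightarrow> int \<times> int \<Rightarrow> int \<times> int" where
  "lincomb p v w z = padd p (pscale p (fst z) v) (pscale p (snd z) w)"

definition det2 :: "int \<times> int \<Rightarrow> int \<times> int \<Rightarrow> int" where
  "det2 v w = fst v * snd w - snd v * fst w"

lemma mem_plane: "(a, b) \<in> plane p \<longleftrightarrow> 0 \<le> a \<and> a < int p \<and> 0 \<le> b \<and> b < int p"
  by (simp add: plane_def)

lemma plane_mod: "u \<in> plane p \<Longrightarrow> fst u mod int p = fst u \<and> snd u mod int p = snd u"
  by (cases u) (simp add: plane_def)

lemma finite_plane [simp]: "finite (plane p)"
  by (simp add: plane_def)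

lemma card_plane: "card (plane p) = p ^ 2"
  by (simp add: plane_def card_cartesian_product power2_eq_square)

lemma mult_Zp2: "u \<otimes>\<^bsub>Zp2 p\<^esub> w = padd p u w"
  by (simp add: mult_DirProd' padd_def)

lemma lincomb_Pair:
  "lincomb p v w (x, y) = ((x * fst v + y * fst w) mod int p, (x * snd v + y * snd w) mod int p)"
  by (simp add: lincomb_def padd_def pscale_def mod_simps)

lemma pscale_mod: "pscale p (c mod int p) u = pscale p c u"
  by (simp add: pscale_def mod_simps)

lemma pscale_pscale: "pscale p c (pscale p d u) = pscale p (c * d) u"
  by (simp add: pscale_def mod_simps mult.assoc)

lemma pscale_0: "pscale p 0 u = (0, 0)"
  by (simp add: pscale_def)

lemma padd_0: "u \<in> plane p \<Longrightarrow> padd p (0, 0) u = u"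
  by (simp add: padd_def prod_eq_iff plane_mod)

lemma mod_mult_add_eq: "(a * (b mod m) + c) mod m = (a * b + c) mod (m::int)"
  by (metis mod_add_left_eq mod_mult_right_eq)

lemma mod_mult_add_mult_eq:
  "(x * (a mod m) + y * (b mod m)) mod m = (x * a + y * b) mod (m::int)"
  "((a mod m) * x + (b mod m) * y) mod m = (a * x + b * y) mod (m::int)"
  by (metis mod_add_eq mod_mult_right_eq, metis mod_add_eq mod_mult_left_eq)

lemma lincomb_eqI:
  assumes x: "[x = x'] (mod int p)" and y: "[y = y'] (mod int p)"
  shows "lincomb p v w (x, y) = lincomb p v w (x', y')"
proof -
  have "[x * fst v + y * fst w = x' * fst v + y' * fst w] (mod int p)"
    "[x * snd v + y * snd w = x' * snd v + y' * snd w] (mod int p)"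
    using x y by (simp_all add: cong_add cong_mult)
  then show ?thesis by (simp add: lincomb_Pair cong_def)
qed

lemma lincomb_basis:
  "v \<in> plane p \<Longrightarrow> w \<in> plane p \<Longrightarrow> lincomb p v w (1, 0) = v \<and> lincomb p v w (0, 1) = w"
  by (simp add: lincomb_Pair plane_mod)

lemma pscale_lincomb: "pscale p c (lincomb p v w (x, y)) = lincomb p v w (c * x, c * y)"
  unfolding pscale_def lincomb_Pair fst_conv snd_conv mod_mult_right_eq by (simp add: algebra_simps)

lemma pscale_eq_lincomb:
  assumes "v \<in> plane p" "w \<in> plane p"
  shows "pscale p c v = lincomb p v w (c, 0)" "pscale p c w = lincomb p v w (0, c)"
  using pscale_lincomb[of p c v w 1 0] pscale_lincomb[of p c v w 0 1] lincomb_basis[OF assms]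
  by simp_all

lemma lincomb_lincomb:
  "lincomb p (lincomb p v w a) (lincomb p v w b) (x, y)
    = lincomb p v w (x * fst a + y * fst b, x * snd a + y * snd b)"
proof -
  obtain a1 a2 b1 b2 where ab: "a = (a1, a2)" "b = (b1, b2)" by (cases a, cases b)
  show ?thesis
    unfolding ab lincomb_Pair fst_conv snd_conv mod_mult_add_mult_eq(1)
    by (simp add: algebra_simps)
qed

lemma eigenvector_of_shear:
  assumes "[\<alpha> + c * l = \<mu> * c] (mod int p)"
  shows "lincomb p (lincomb p v w (l, 0)) (lincomb p v w (\<alpha>, \<mu>)) (c, 1)
    = pscale p \<mu> (lincomb p v w (c, 1))"
proof -
  have "[c * l + \<alpha> = \<mu> * c] (mod int p)" using assms by (simp add: add.commute)
  then show ?thesis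
    unfolding lincomb_lincomb pscale_lincomb by (auto intro: lincomb_eqI)
qed

lemma dvd_det2_lincomb_iff:
  "int p dvd det2 (lincomb p v w a) (lincomb p v w b)
    \<longleftrightarrow> int p dvd (fst a * snd b - snd a * fst b) * det2 v w"
proof (rule cong_dvd_iff)
  let ?a1 = "fst a" and ?a2 = "snd a" and ?b1 = "fst b" and ?b2 = "snd b"
  have "[det2 (lincomb p v w a) (lincomb p v w b)
      = (?a1 * fst v + ?a2 * fst w) * (?b1 * snd v + ?b2 * snd w)
        - (?a1 * snd v + ?a2 * snd w) * (?b1 * fst v + ?b2 * fst w)] (mod int p)"
    unfolding lincomb_Pair[of p v w "fst a" "snd a", simplified]
      lincomb_Pair[of p v w "fst b" "snd b", simplified] det2_def fst_conv snd_conv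
    by (intro cong_diff cong_mult) (simp_all add: cong_def)
  also have "(?a1 * fst v + ?a2 * fst w) * (?b1 * snd v + ?b2 * snd w)
        - (?a1 * snd v + ?a2 * snd w) * (?b1 * fst v + ?b2 * fst w)
      = (?a1 * ?b2 - ?a2 * ?b1) * det2 v w"
    by (simp add: det2_def algebra_simps)
  finally show "[det2 (lincomb p v w a) (lincomb p v w b) = (?a1 * ?b2 - ?a2 * ?b1) * det2 v w] (mod int p)" .
qed

locale mod_prime =
  fixes p :: nat
  assumes prime: "prime p"
begin

lemma p_gt_1: "1 < p"
  using prime_gt_1_nat[OF prime] .

lemma p_dvd_mult_iff: "int p dvd a * b \<longleftrightarrow> int p dvd a \<or> int p dvd b"
  using prime by (simp add: prime_dvd_mult_iff)

lemma residue_eqI: "0 \<le> x \<Longrightarrow> x < int p \<Longrightarrow> 0 \<le> y \<Longrightarrow> y < int p \<Longrightarrow> int p dvd x - y \<Longrightarrow> x = y"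
  by (metis mod_eq_dvd_iff mod_pos_pos_trivial)

lemma residue_eq_0I: "0 \<le> x \<Longrightarrow> x < int p \<Longrightarrow> int p dvd x \<Longrightarrow> x = 0"
  using residue_eqI[of x 0] p_gt_1 by simp

lemma not_dvd_residue: "0 < x \<Longrightarrow> x < int p \<Longrightarrow> \<not> int p dvd x"
  using residue_eq_0I[of x] by auto

lemma ex_inverse_mod: assumes "\<not> int p dvd a" shows "\<exists>i. (a * i) mod int p = 1"
proof -
  have "coprime a (int p)"
    using prime_imp_coprime[of "int p" a] prime assms by (simp add: coprime_commute)
  then obtain i where "[a * i = 1] (mod int p)" using cong_solve_coprime_int by blast
  then show ?thesis using p_gt_1 by (auto simp: cong_def)
qed

lemma mod_in_range: "0 \<le> x mod int p" "x mod int p < int p"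
  using p_gt_1 by auto

lemma carrier_Zp2: "carrier (Zp2 p) = plane p"
  using p_gt_1 by (simp add: carrier_integer_mod_group plane_def)

lemma group_Zp2: "group (Zp2 p)"
  by (simp add: DirProd_group)

lemma padd_in_plane [simp]: "padd p u w \<in> plane p"
  by (simp add: padd_def plane_def mod_in_range)

lemma pscale_in_plane [simp]: "pscale p c u \<in> plane p"
  by (simp add: pscale_def plane_def mod_in_range)

lemma lincomb_in_plane [simp]: "lincomb p v w z \<in> plane p"
  by (simp add: lincomb_def)

lemma zero_in_plane [simp]: "(0, 0) \<in> plane p"
  using p_gt_1 by (simp add: plane_def)

lemma pow_Zp2: "u \<in> plane p \<Longrightarrow> u [^]\<^bsub>Zp2 p\<^esub> n = pscale p (int n) u"
proof (induction n)
  case 0 then show ?case by (simp add: pscale_def)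
next
  case (Suc n)
  then show ?case
    by (simp add: mult_Zp2 padd_def pscale_def plane_mod mod_simps algebra_simps)
qed

lemma hom_in_plane: "g \<in> hom (Zp2 p) (Zp2 p) \<Longrightarrow> u \<in> plane p \<Longrightarrow> g u \<in> plane p"
  by (metis carrier_Zp2 hom_in_carrier)

lemma hom_padd:
  "g \<in> hom (Zp2 p) (Zp2 p) \<Longrightarrow> u \<in> plane p \<Longrightarrow> w \<in> plane p \<Longrightarrow> g (padd p u w) = padd p (g u) (g w)"
  by (rule hom_mult[of g "Zp2 p" "Zp2 p" u w, unfolded carrier_Zp2 mult_Zp2])

lemma hom_zero: "g \<in> hom (Zp2 p) (Zp2 p) \<Longrightarrow> g (0, 0) = (0, 0)"
  using hom_one[OF _ group_Zp2 group_Zp2] by simp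

lemma hom_pscale:
  assumes g: "g \<in> hom (Zp2 p) (Zp2 p)" and u: "u \<in> plane p"
  shows "g (pscale p c u) = pscale p c (g u)"
proof -
  obtain n where n: "c mod int p = int n" using mod_in_range(1) nonneg_int_cases by metis
  have "g (pscale p (int n) u) = pscale p (int n) (g u)"
    using hom_nat_pow[OF g _ group_Zp2 group_Zp2, of u n, unfolded carrier_Zp2] u
      hom_in_plane[OF g u] by (simp add: pow_Zp2)
  then show ?thesis using pscale_mod n by metis
qed

lemma hom_lincomb:
  "g \<in> hom (Zp2 p) (Zp2 p) \<Longrightarrow> v \<in> plane p \<Longrightarrow> w \<in> plane p \<Longrightarrow>
    g (lincomb p v w z) = lincomb p (g v) (g w) z"
  unfolding lincomb_def by (simp add: hom_padd hom_pscale)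

lemma funpow_hom: assumes g: "g \<in> hom (Zp2 p) (Zp2 p)" shows "g ^^ k \<in> hom (Zp2 p) (Zp2 p)"
proof (induction k)
  case 0
  show ?case using id_iso[of "Zp2 p"] by (simp add: iso_def id_def)
next
  case (Suc k)
  then show ?case using hom_compose[OF Suc.IH g] by (simp only: funpow.simps(2))
qed

lemma hom_Zp2I:
  assumes "\<And>u. u \<in> plane p \<Longrightarrow> g u \<in> plane p"
    and "\<And>u w. u \<in> plane p \<Longrightarrow> w \<in> plane p \<Longrightarrow> g (padd p u w) = padd p (g u) (g w)"
  shows "g \<in> hom (Zp2 p) (Zp2 p)"
  using assms unfolding hom_def carrier_Zp2 mult_Zp2 by blast

lemma iso_of_hom_inj:
  assumes "g \<in> hom (Zp2 p) (Zp2 p)" "inj_on g (plane p)"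
  shows "g \<in> iso (Zp2 p) (Zp2 p)"
proof -
  have "g ` plane p = plane p"
    using assms hom_in_plane by (intro endo_inj_surj) auto
  then show ?thesis using assms unfolding iso_def bij_betw_def carrier_Zp2 by simp
qed

lemma hom_of_iso: "g \<in> iso (Zp2 p) (Zp2 p) \<Longrightarrow> g \<in> hom (Zp2 p) (Zp2 p)"
  by (simp add: iso_def)

lemma inj_on_of_iso: "g \<in> iso (Zp2 p) (Zp2 p) \<Longrightarrow> inj_on g (plane p)"
  unfolding iso_def bij_betw_def carrier_Zp2 by simp

lemma finite_perm_iso: assumes "g \<in> iso (Zp2 p) (Zp2 p)" shows "finite_perm g (plane p)"
proof
  show "bij_betw g (plane p) (plane p)" using assms unfolding iso_def carrier_Zp2 by simp
qed simp

lemma inj_on_lincomb: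
  assumes v: "v \<in> plane p" and w: "w \<in> plane p" and det: "\<not> int p dvd det2 v w"
  shows "inj_on (lincomb p v w) (plane p)"
proof
  fix z z' assume z: "z \<in> plane p" and z': "z' \<in> plane p" and eq: "lincomb p v w z = lincomb p v w z'"
  obtain x y x' y' where xy: "z = (x, y)" "z' = (x', y')" by (cases z, cases z')
  have e1: "int p dvd (x - x') * fst v + (y - y') * fst w"
    and e2: "int p dvd (x - x') * snd v + (y - y') * snd w"
    using eq unfolding xy lincomb_Pair by (simp_all add: mod_eq_dvd_iff algebra_simps)
  have "(x - x') * det2 v w
      = snd w * ((x - x') * fst v + (y - y') * fst w) - fst w * ((x - x') * snd v + (y - y') * snd w)"
    "(y - y') * det2 v w
      = fst v * ((x - x') * snd v + (y - y') * snd w) - snd v * ((x - x') * fst v + (y - y') * fst w)"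
    by (simp_all add: det2_def algebra_simps)
  then have "int p dvd (x - x') * det2 v w" "int p dvd (y - y') * det2 v w"
    using e1 e2 by simp_all
  then have "int p dvd x - x'" "int p dvd y - y'" using det p_dvd_mult_iff by blast+
  then show "z = z'" using z z' unfolding xy by (auto simp: mem_plane intro: residue_eqI)
qed

lemma bij_lincomb:
  assumes "v \<in> plane p" "w \<in> plane p" "\<not> int p dvd det2 v w"
  shows "bij_betw (lincomb p v w) (plane p) (plane p)"
proof -
  have "lincomb p v w ` plane p = plane p"
    by (rule endo_inj_surj) (auto simp: inj_on_lincomb[OF assms])
  then show ?thesis using inj_on_lincomb[OF assms] by (simp add: bij_betw_def)
qed

lemma not_dvd_det2I:
  assumes v: "v \<in> plane p" "v \<noteq> (0, 0)" and w: "w \<in> plane p"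
    and not_multiple: "\<And>c. w \<noteq> pscale p c v"
  shows "\<not> int p dvd det2 v w"
proof
  assume dvd: "int p dvd det2 v w"
  obtain v1 v2 w1 w2 where vw: "v = (v1, v2)" "w = (w1, w2)" by (cases v, cases w)
  have range: "0 \<le> v1" "v1 < int p" "0 \<le> v2" "v2 < int p" "0 \<le> w1" "w1 < int p"
    "0 \<le> w2" "w2 < int p"
    using v(1) w by (auto simp: vw mem_plane)
  have dvd': "int p dvd v1 * w2 - v2 * w1" using dvd by (simp add: det2_def vw)
  show False
  proof (cases "v1 = 0")
    case False
    then have "\<not> int p dvd v1" using range residue_eq_0I by blast
    then obtain i where i: "(v1 * i) mod int p = 1" using ex_inverse_mod by blast
    have "(w1 * i * v1) mod int p = (w1 * ((v1 * i) mod int p)) mod int p"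
      by (simp add: mod_simps algebra_simps)
    then have "(w1 * i * v1) mod int p = w1" using i range by simp
    moreover have "(w1 * i * v2) mod int p = (i * (v1 * w2)) mod int p"
      using dvd' by (metis mod_eq_dvd_iff mod_mult_right_eq mult.commute mult.left_commute)
    moreover have "(i * (v1 * w2)) mod int p = (w2 * ((v1 * i) mod int p)) mod int p"
      by (simp add: mod_simps algebra_simps)
    ultimately have "pscale p (w1 * i) v = w" using i range by (simp add: pscale_def vw)
    then show False using not_multiple by metis
  next
    case True
    then have "\<not> int p dvd v2" using v range residue_eq_0I vw by auto
    then obtain i where i: "(v2 * i) mod int p = 1" using ex_inverse_mod by blast
    have "int p dvd v2 * w1" using dvd' True by simp
    then have "w1 = 0" using p_dvd_mult_iff \<open>\<not> int p dvd v2\<close> range residue_eq_0I by blast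
    have "(w2 * i * v2) mod int p = (w2 * ((v2 * i) mod int p)) mod int p"
      by (simp add: mod_simps algebra_simps)
    then have "pscale p (w2 * i) v = w" using i range True \<open>w1 = 0\<close> by (simp add: pscale_def vw)
    then show False using not_multiple by metis
  qed
qed

lemma ex_not_dvd_det2:
  assumes v: "v \<in> plane p" "v \<noteq> (0, 0)"
  obtains w where "w \<in> plane p" "\<not> int p dvd det2 v w"
proof -
  obtain v1 v2 where vv: "v = (v1, v2)" by (cases v)
  have range: "0 \<le> v1" "v1 < int p" "0 \<le> v2" "v2 < int p" using v(1) by (simp_all add: vv plane_def)
  show ?thesis
  proof (cases "v1 = 0")
    case True
    then have "\<not> int p dvd det2 v (1, 0)"
      using v(2) range residue_eq_0I by (auto simp: vv det2_def)
    then show ?thesis using p_gt_1 by (intro that[of "(1, 0)"]) (simp_all add: plane_def)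
  next
    case False
    then have "\<not> int p dvd det2 v (0, 1)"
      using range residue_eq_0I by (auto simp: vv det2_def)
    then show ?thesis using p_gt_1 by (intro that[of "(0, 1)"]) (simp_all add: plane_def)
  qed
qed

end

section \<open>Diagonal maps and Jordan blocks\<close>

definition diag_map :: "nat \<Rightarrow> int \<Rightarrow> int \<Rightarrow> int \<times> int \<Rightarrow> int \<times> int" where
  "diag_map p l m z = ((l * fst z) mod int p, (m * snd z) mod int p)"

definition jordan_map :: "nat \<Rightarrow> int \<Rightarrow> int \<times> int \<Rightarrow> int \<times> int" where
  "jordan_map p l z = ((l * fst z + snd z) mod int p, (l * snd z) mod int p)"

context mod_prime
begin

lemma mult_mod_pos: "0 < l \<Longrightarrow> l < int p \<Longrightarrow> 0 < x \<Longrightarrow> x < int p \<Longrightarrow> 0 < (l * x) mod int p"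
  using not_dvd_residue p_dvd_mult_iff mod_in_range(1)[of "l * x"]
  by (metis dvd_eq_mod_eq_0 order_le_less)

lemma mult_mod_cancel:
  assumes "0 < l" "l < int p" "0 \<le> x" "x < int p" "0 \<le> x'" "x' < int p"
    and "(l * x) mod int p = (l * x') mod int p"
  shows "x = x'"
proof -
  have "int p dvd l * (x - x')" using assms(7) by (simp add: mod_eq_dvd_iff algebra_simps)
  then have "int p dvd x - x'" using assms(1,2) not_dvd_residue p_dvd_mult_iff by blast
  then show ?thesis using assms residue_eqI by blast
qed

lemma diag_map_iso:
  assumes l: "0 < l" "l < int p" and m: "0 < m" "m < int p"
  shows "diag_map p l m \<in> iso (Zp2 p) (Zp2 p)"
proof (rule iso_of_hom_inj)
  show "diag_map p l m \<in> hom (Zp2 p) (Zp2 p)"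
    by (rule hom_Zp2I)
      (simp_all add: diag_map_def padd_def plane_def mod_in_range mod_simps distrib_left)
  show "inj_on (diag_map p l m) (plane p)"
  proof
    fix z z' assume z: "z \<in> plane p" "z' \<in> plane p" and eq: "diag_map p l m z = diag_map p l m z'"
    obtain x y x' y' where xy: "z = (x, y)" "z' = (x', y')" by (cases z, cases z')
    have "x = x'" using mult_mod_cancel[OF l, of x x'] z eq by (simp add: xy diag_map_def plane_def)
    moreover have "y = y'" using mult_mod_cancel[OF m, of y y'] z eq by (simp add: xy diag_map_def plane_def)
    ultimately show "z = z'" using xy by simp
  qed
qed

lemma jordan_map_iso:
  assumes l: "0 < l" "l < int p"
  shows "jordan_map p l \<in> iso (Zp2 p) (Zp2 p)"
proof (rule iso_of_hom_inj)
  have "jordan_map p l (padd p u w) = padd p (jordan_map p l u) (jordan_map p l w)" for u w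
  proof -
    have "((l * fst u + snd u) mod int p + (l * fst w + snd w) mod int p) mod int p
        = ((l * fst u + snd u) + (l * fst w + snd w)) mod int p"
      by (rule mod_add_eq)
    also have "\<dots> = (l * (fst u + fst w) + (snd u + snd w)) mod int p"
      by (simp add: algebra_simps)
    also have "\<dots> = (l * ((fst u + fst w) mod int p) + (snd u + snd w) mod int p) mod int p"
      by (simp add: mod_add_right_eq mod_mult_add_eq)
    finally have "((l * fst u + snd u) mod int p + (l * fst w + snd w) mod int p) mod int p
        = (l * ((fst u + fst w) mod int p) + (snd u + snd w) mod int p) mod int p" .
    moreover have "((l * snd u) mod int p + (l * snd w) mod int p) mod int p
        = (l * ((snd u + snd w) mod int p)) mod int p"
      unfolding mod_add_eq mod_mult_right_eq distrib_left ..
    ultimately show ?thesis unfolding jordan_map_def padd_def fst_conv snd_conv by simp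
  qed
  then show "jordan_map p l \<in> hom (Zp2 p) (Zp2 p)"
    by (intro hom_Zp2I) (simp_all add: jordan_map_def plane_def mod_in_range)
  show "inj_on (jordan_map p l) (plane p)"
  proof
    fix z z' assume z: "z \<in> plane p" "z' \<in> plane p" and eq: "jordan_map p l z = jordan_map p l z'"
    obtain x y x' y' where xy: "z = (x, y)" "z' = (x', y')" by (cases z, cases z')
    have "y = y'" using eq z mult_mod_cancel[OF l, of y y'] by (simp add: xy jordan_map_def plane_def)
    then have "(l * x) mod int p = (l * x') mod int p"
      using eq by (simp add: xy jordan_map_def mod_eq_dvd_iff algebra_simps)
    then show "z = z'" using z mult_mod_cancel[OF l, of x x'] \<open>y = y'\<close> by (simp add: xy plane_def)
  qed
qed

lemma funpow_diag_map:
  "z \<in> plane p \<Longrightarrow> (diag_map p l m ^^ k) z = ((l ^ k * fst z) mod int p, (m ^ k * snd z) mod int p)"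
  by (induction k) (auto simp: diag_map_def plane_mod mod_simps algebra_simps)

lemma funpow_jordan_map:
  "z \<in> plane p \<Longrightarrow> (jordan_map p l ^^ k) z =
    ((l ^ k * fst z + int k * l ^ (k - 1) * snd z) mod int p, (l ^ k * snd z) mod int p)"
proof (induction k)
  case 0
  then show ?case by (simp add: plane_mod)
next
  case (Suc k)
  have "l * (l ^ k * fst z + int k * l ^ (k - 1) * snd z) + l ^ k * snd z
      = l ^ Suc k * fst z + int (Suc k) * l ^ (Suc k - 1) * snd z"
    by (cases k) (simp_all add: algebra_simps)
  moreover have "(l * (x mod int p) + y mod int p) mod int p = (l * x + y) mod int p" for x y
    unfolding mod_add_right_eq mod_mult_add_eq ..
  ultimately show ?case
    using Suc by (simp add: jordan_map_def mod_mult_right_eq mult.assoc)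
qed

lemma lincomb_diag_map:
  assumes g: "g \<in> hom (Zp2 p) (Zp2 p)" and v: "v \<in> plane p" and w: "w \<in> plane p"
    and gv: "g v = pscale p l v" and gw: "g w = pscale p m w"
  shows "g (lincomb p v w z) = lincomb p v w (diag_map p l m z)"
  using hom_lincomb[OF g v w] gv gw
  by (simp add: lincomb_def diag_map_def pscale_mod pscale_pscale mult.commute)

lemma lincomb_jordan_map:
  assumes g: "g \<in> hom (Zp2 p) (Zp2 p)" and v: "v \<in> plane p" and w: "w \<in> plane p"
    and gv: "g v = pscale p l v" and gw: "g w = padd p v (pscale p l w)"
  shows "g (lincomb p v w z) = lincomb p v w (jordan_map p l z)"
proof -
  obtain x y where z: "z = (x, y)" by (cases z)
  have gw': "g w = ((fst v + l * fst w) mod int p, (snd v + l * snd w) mod int p)"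
    using gw by (simp add: padd_def pscale_def mod_simps)
  have "g (lincomb p v w z) = lincomb p (g v) (g w) z" by (rule hom_lincomb[OF g v w])
  also have "\<dots> = ((x * (l * fst v) + y * (fst v + l * fst w)) mod int p,
                    (x * (l * snd v) + y * (snd v + l * snd w)) mod int p)"
    unfolding z gv gw' lincomb_Pair by (simp add: pscale_def mod_mult_add_mult_eq)
  also have "\<dots> = (((l * x + y) * fst v + (l * y) * fst w) mod int p,
                    ((l * x + y) * snd v + (l * y) * snd w) mod int p)"
    by (simp add: algebra_simps)
  also have "\<dots> = lincomb p v w (jordan_map p l z)"
    unfolding z jordan_map_def lincomb_Pair by (simp add: mod_mult_add_mult_eq(2))
  finally show ?thesis .
qed

lemma dvd_pow_minus_1_iff_ord:
  assumes "0 < l" "l < int p"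
  shows "int p dvd l ^ k - 1 \<longleftrightarrow> ord p (nat l) dvd k"
proof -
  have "int p dvd l ^ k - 1 \<longleftrightarrow> [int (nat l ^ k) = int 1] (mod int p)"
    using assms by (simp add: cong_iff_dvd_diff)
  also have "\<dots> \<longleftrightarrow> ord p (nat l) dvd k" by (simp only: cong_int_iff ord_divides)
  finally show ?thesis .
qed

lemma ord_pos: "0 < l \<Longrightarrow> l < int p \<Longrightarrow> 0 < ord p (nat l)"
  and ord_dvd_p_minus_1: "0 < l \<Longrightarrow> l < int p \<Longrightarrow> ord p (nat l) dvd p - 1"
proof -
  assume "0 < l" "l < int p"
  then have "\<not> p dvd nat l" by (auto dest: dvd_imp_le)
  then have "coprime p (nat l)" using prime prime_imp_coprime by blast
  then show "0 < ord p (nat l)" "ord p (nat l) dvd p - 1"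
    using order_divides_totient[of p "nat l"] totient_prime[OF prime] by simp_all
qed

lemma mult_pow_mod_eq_iff:
  assumes l: "0 < l" "l < int p" and x: "0 < x" "x < int p"
  shows "(l ^ k * x) mod int p = x \<longleftrightarrow> ord p (nat l) dvd k"
proof -
  have "(l ^ k * x) mod int p = x \<longleftrightarrow> (l ^ k * x) mod int p = x mod int p" using x by simp
  also have "\<dots> \<longleftrightarrow> int p dvd (l ^ k - 1) * x" by (simp add: mod_eq_dvd_iff algebra_simps)
  also have "\<dots> \<longleftrightarrow> int p dvd l ^ k - 1" using x not_dvd_residue p_dvd_mult_iff by blast
  finally show ?thesis using dvd_pow_minus_1_iff_ord[OF l] by simp
qed

lemma card_residues: "card {0<..<int p} = p - 1"
  using p_gt_1 by simp

lemma cycle_lengths_fixing_zero: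
  assumes g: "finite_perm g (plane p)" and g0: "g (0, 0) = (0, 0)"
    and m: "\<And>v. v \<in> plane p \<Longrightarrow> v \<noteq> (0, 0) \<Longrightarrow> card (cycle_of g v) = m"
  shows "cycle_lengths g (plane p) = replicate_mset ((p^2 - 1) div m) m + {#1#}"
    and "m dvd p^2 - 1"
proof -
  interpret finite_perm g "plane p" by fact
  have zero: "finite_perm g {(0, 0)}" using g0 by (intro finite_perm_subset) auto
  have card: "card (plane p - {(0, 0)}) = p^2 - 1" using card_plane by simp
  have "(g ^^ n) (0, 0) = (0, 0)" for n by (induction n) (simp_all add: g0)
  then have "cycle_of g (0, 0) = {(0, 0)}" unfolding cycle_of_def by auto
  then have "cycle_lengths g {(0, 0)} = {#1#}" unfolding cycle_lengths_def by simp
  moreover have "cycle_lengths g (plane p - {(0, 0)}) = replicate_mset ((p^2 - 1) div m) m"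
    using finite_perm.cycle_lengths_const[OF finite_perm_Diff[OF zero]] m card by auto
  ultimately show "cycle_lengths g (plane p) = replicate_mset ((p^2 - 1) div m) m + {#1#}"
    using cycle_lengths_split[OF zero] by simp
  show "m dvd p^2 - 1"
    using finite_perm.cycle_length_dvd_card[OF finite_perm_Diff[OF zero]] m card by auto
qed

lemma cycle_lengths_diag_map:
  assumes l: "0 < l" "l < int p" and m: "0 < m" "m < int p"
  defines "d1 \<equiv> ord p (nat l)" and "d2 \<equiv> ord p (nat m)"
  shows "cycle_lengths (diag_map p l m) (plane p)
    = replicate_mset ((p - 1)^2 div lcm d1 d2) (lcm d1 d2)
      + replicate_mset ((p - 1) div d1) d1 + replicate_mset ((p - 1) div d2) d2 + {#1#}"
proof -
  let ?D = "diag_map p l m"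
  interpret finite_perm ?D "plane p" using finite_perm_iso[OF diag_map_iso[OF l m]] .
  define S0 where "S0 = {(0::int, 0::int)}"
  define S1 where "S1 = {0<..<int p} \<times> {0::int}"
  define S2 where "S2 = {0::int} \<times> {0<..<int p}"
  define S3 where "S3 = {0<..<int p} \<times> {0<..<int p}"
  have fixl: "(l ^ k * x) mod int p = x \<longleftrightarrow> d1 dvd k"
    and fixm: "(m ^ k * x) mod int p = x \<longleftrightarrow> d2 dvd k" if "0 < x" "x < int p" for x k
    using mult_pow_mod_eq_iff[OF l that] mult_pow_mod_eq_iff[OF m that] d1_def d2_def by simp_all
  have sub: "S0 \<subseteq> plane p" "S1 \<subseteq> plane p" "S2 \<subseteq> plane p" "S3 \<subseteq> plane p"
    using p_gt_1 by (auto simp: S0_def S1_def S2_def S3_def plane_def)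
  have inv: "?D ` S0 \<subseteq> S0" "?D ` S1 \<subseteq> S1" "?D ` S2 \<subseteq> S2" "?D ` S3 \<subseteq> S3"
    using mult_mod_pos[OF l] mult_mod_pos[OF m] mod_in_range p_gt_1
    by (auto simp: S0_def S1_def S2_def S3_def diag_map_def)
  have c0: "card (cycle_of ?D z) = 1" if "z \<in> S0" for z
    using that sub by (intro card_cycle_ofI) (auto simp: S0_def funpow_diag_map)
  have c1: "card (cycle_of ?D z) = d1" if "z \<in> S1" for z
    using that sub by (intro card_cycle_ofI) (auto simp: S1_def funpow_diag_map fixl)
  have c2: "card (cycle_of ?D z) = d2" if "z \<in> S2" for z
    using that sub by (intro card_cycle_ofI) (auto simp: S2_def funpow_diag_map fixm)
  have c3: "card (cycle_of ?D z) = lcm d1 d2" if "z \<in> S3" for z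
    using that sub by (intro card_cycle_ofI) (auto simp: S3_def funpow_diag_map fixl fixm)
  note pieces = cycle_lengths_const_on[OF sub(1) inv(1) c0] cycle_lengths_const_on[OF sub(2) inv(2) c1]
    cycle_lengths_const_on[OF sub(3) inv(3) c2] cycle_lengths_const_on[OF sub(4) inv(4) c3]
  have "plane p = ((S3 \<union> S1) \<union> S2) \<union> S0"
    using p_gt_1 by (auto simp: S0_def S1_def S2_def S3_def plane_def)
  moreover have "(S3 \<union> S1) \<inter> S2 = {}" "S3 \<inter> S1 = {}" "((S3 \<union> S1) \<union> S2) \<inter> S0 = {}"
    by (auto simp: S0_def S1_def S2_def S3_def)
  moreover have "card S0 = 1" "card S1 = p - 1" "card S2 = p - 1" "card S3 = (p - 1)^2"
    unfolding S0_def S1_def S2_def S3_def card_cartesian_product card_residues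
    by (simp_all add: power2_eq_square)
  ultimately show ?thesis
    using pieces by (simp add: cycle_lengths_Un finite_perm_Un)
qed

lemma funpow_jordan_map_fixed_iff:
  assumes l: "0 < l" "l < int p" and z: "z \<in> plane p" "0 < snd z"
  shows "(jordan_map p l ^^ k) z = z \<longleftrightarrow> p * ord p (nat l) dvd k"
proof -
  obtain x y where xy: "z = (x, y)" by (cases z)
  have x: "0 \<le> x" "x < int p" and y: "0 < y" "y < int p" using z by (auto simp: xy plane_def)
  let ?d = "ord p (nat l)"
  let ?K = "int k * l ^ (k - 1) * y"
  have shear: "(l ^ k * x + ?K) mod int p = x \<longleftrightarrow> int p dvd ?K" if "?d dvd k"
  proof -
    have "int p dvd (l ^ k - 1) * x"
      using dvd_pow_minus_1_iff_ord[OF l] that by (simp add: dvd_mult2)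
    have "(l ^ k * x + ?K) mod int p = x \<longleftrightarrow> (l ^ k * x + ?K) mod int p = x mod int p"
      using x by simp
    also have "\<dots> \<longleftrightarrow> int p dvd (l ^ k - 1) * x + ?K"
      by (simp add: mod_eq_dvd_iff algebra_simps)
    also have "\<dots> \<longleftrightarrow> int p dvd ?K"
      using \<open>int p dvd (l ^ k - 1) * x\<close> by (simp add: dvd_add_right_iff)
    finally show ?thesis .
  qed
  have "\<not> int p dvd l ^ (k - 1)"
    using not_dvd_residue[OF l] prime_dvd_power[of "int p" l "k - 1"] prime by auto
  then have K: "int p dvd ?K \<longleftrightarrow> p dvd k"
    using not_dvd_residue[OF y] by (simp add: p_dvd_mult_iff)
  have "?d \<le> p - 1" using dvd_imp_le[OF ord_dvd_p_minus_1[OF l]] p_gt_1 by simp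
  then have "\<not> p dvd ?d" using ord_pos[OF l] p_gt_1 by (auto dest: dvd_imp_le)
  then have "coprime p ?d" using prime prime_imp_coprime by blast
  then have pd: "p * ?d dvd k \<longleftrightarrow> p dvd k \<and> ?d dvd k"
    using divides_mult[of p k ?d] dvd_mult_left[of p ?d k] dvd_mult_right[of p ?d k] by blast
  have fixed_iff: "(jordan_map p l ^^ k) z = z \<longleftrightarrow>
      (l ^ k * x + ?K) mod int p = x \<and> (l ^ k * y) mod int p = y"
    using funpow_jordan_map[OF z(1)] by (simp add: xy)
  show ?thesis
  proof
    assume "(jordan_map p l ^^ k) z = z"
    then have "?d dvd k" "(l ^ k * x + ?K) mod int p = x"
      using fixed_iff mult_pow_mod_eq_iff[OF l y] by simp_all
    then show "p * ?d dvd k" using shear K pd by simp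
  next
    assume "p * ?d dvd k"
    then have "p dvd k" "?d dvd k" using pd by simp_all
    then show "(jordan_map p l ^^ k) z = z"
      using fixed_iff mult_pow_mod_eq_iff[OF l y] shear K by simp
  qed
qed

lemma cycle_lengths_jordan_map:
  assumes l: "0 < l" "l < int p"
  defines "d \<equiv> ord p (nat l)"
  shows "cycle_lengths (jordan_map p l) (plane p)
    = replicate_mset ((p - 1) div d) (p * d) + replicate_mset ((p - 1) div d) d + {#1#}"
proof -
  let ?J = "jordan_map p l"
  interpret finite_perm ?J "plane p" using finite_perm_iso[OF jordan_map_iso[OF l]] .
  define S0 where "S0 = {(0::int, 0::int)}"
  define S1 where "S1 = {0<..<int p} \<times> {0::int}"
  define S2 where "S2 = {0..<int p} \<times> {0<..<int p}"
  have sub: "S0 \<subseteq> plane p" "S1 \<subseteq> plane p" "S2 \<subseteq> plane p"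
    using p_gt_1 by (auto simp: S0_def S1_def S2_def plane_def)
  have inv: "?J ` S0 \<subseteq> S0" "?J ` S1 \<subseteq> S1" "?J ` S2 \<subseteq> S2"
    using mult_mod_pos[OF l] mod_in_range p_gt_1
    by (auto simp: S0_def S1_def S2_def jordan_map_def)
  have c0: "card (cycle_of ?J z) = 1" if "z \<in> S0" for z
    using that sub by (intro card_cycle_ofI) (auto simp: S0_def funpow_jordan_map)
  have c1: "card (cycle_of ?J z) = d" if "z \<in> S1" for z
    using that sub mult_pow_mod_eq_iff[OF l] by (intro card_cycle_ofI) (auto simp: S1_def funpow_jordan_map d_def)
  have c2: "card (cycle_of ?J z) = p * d" if "z \<in> S2" for z
    using that sub funpow_jordan_map_fixed_iff[OF l] by (intro card_cycle_ofI) (auto simp: S2_def d_def)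
  note pieces = cycle_lengths_const_on[OF sub(1) inv(1) c0] cycle_lengths_const_on[OF sub(2) inv(2) c1]
    cycle_lengths_const_on[OF sub(3) inv(3) c2]
  have "plane p = (S2 \<union> S1) \<union> S0"
    using p_gt_1 by (auto simp: S0_def S1_def S2_def plane_def)
  moreover have "S2 \<inter> S1 = {}" "(S2 \<union> S1) \<inter> S0 = {}"
    by (auto simp: S0_def S1_def S2_def)
  moreover have "card S0 = 1" "card S1 = p - 1" "card S2 = p * (p - 1)"
    unfolding S0_def S1_def S2_def card_cartesian_product card_residues using p_gt_1 by simp_all
  moreover have "p * (p - 1) div (p * d) = (p - 1) div d" using p_gt_1 by simp
  ultimately show ?thesis
    using pieces by (simp add: cycle_lengths_Un finite_perm_Un)
qed

end

section \<open>Cycle types of automorphisms\<close>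

definition aut_cycle_type :: "nat \<Rightarrow> nat multiset \<Rightarrow> bool" where
  "aut_cycle_type p M \<longleftrightarrow>
     (\<exists>d. 0 < d \<and> d dvd p ^ 2 - 1 \<and> M = replicate_mset ((p ^ 2 - 1) div d) d + {#1#})
   \<or> (\<exists>d. 0 < d \<and> d dvd p - 1 \<and>
        M = replicate_mset ((p - 1) div d) (p * d) + replicate_mset ((p - 1) div d) d + {#1#})
   \<or> (\<exists>d1 d2. 0 < d1 \<and> 0 < d2 \<and> d1 dvd p - 1 \<and> d2 dvd p - 1 \<and>
        M = replicate_mset ((p - 1) ^ 2 div lcm d1 d2) (lcm d1 d2)
          + replicate_mset ((p - 1) div d1) d1 + replicate_mset ((p - 1) div d2) d2 + {#1#})"

context mod_prime
begin

lemma aut_cycle_type_diag_map: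
  assumes l: "0 < l" "l < int p" and m: "0 < m" "m < int p"
  shows "aut_cycle_type p (cycle_lengths (diag_map p l m) (plane p))"
  unfolding aut_cycle_type_def cycle_lengths_diag_map[OF l m]
  using ord_pos[OF l] ord_pos[OF m] ord_dvd_p_minus_1[OF l] ord_dvd_p_minus_1[OF m] by blast

lemma aut_cycle_type_jordan_map:
  assumes l: "0 < l" "l < int p"
  shows "aut_cycle_type p (cycle_lengths (jordan_map p l) (plane p))"
  unfolding aut_cycle_type_def cycle_lengths_jordan_map[OF l]
  using ord_pos[OF l] ord_dvd_p_minus_1[OF l] by blast

lemma eigenvalue_mod_pos:
  assumes g: "g \<in> iso (Zp2 p) (Zp2 p)" and v: "v \<in> plane p" "v \<noteq> (0, 0)"
    and gv: "g v = pscale p c v"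
  shows "0 < c mod int p"
proof -
  have "c mod int p \<noteq> 0"
  proof
    assume "c mod int p = 0"
    have "g v = pscale p (c mod int p) v" using gv by (simp add: pscale_mod)
    also have "\<dots> = g (0, 0)"
      using \<open>c mod int p = 0\<close> pscale_0 hom_zero[OF hom_of_iso[OF g]] by simp
    finally show False using v inj_on_of_iso[OF g] by (auto dest: inj_onD)
  qed
  then show ?thesis using mod_in_range(1)[of c] by linarith
qed

lemma aut_cycle_type_if_eigenbasis:
  assumes g: "g \<in> iso (Zp2 p) (Zp2 p)" and v: "v \<in> plane p" and w: "w \<in> plane p"
    and det: "\<not> int p dvd det2 v w"
    and gv: "g v = pscale p l v" and gw: "g w = pscale p m w"
  shows "aut_cycle_type p (cycle_lengths g (plane p))"
proof -
  have "v \<noteq> (0, 0)" "w \<noteq> (0, 0)" using det by (auto simp: det2_def)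
  then have l: "0 < l mod int p" "l mod int p < int p" and m: "0 < m mod int p" "m mod int p < int p"
    using eigenvalue_mod_pos[OF g] v w gv gw mod_in_range by auto
  have "g (lincomb p v w z) = lincomb p v w (diag_map p (l mod int p) (m mod int p) z)" for z
    using g v w gv gw by (intro lincomb_diag_map) (simp_all add: hom_of_iso pscale_mod)
  then have "cycle_lengths g (plane p) = cycle_lengths (diag_map p (l mod int p) (m mod int p)) (plane p)"
    by (intro cycle_lengths_conj[OF finite_perm_iso[OF diag_map_iso[OF l m]] bij_lincomb[OF v w det]])
      simp
  then show ?thesis using aut_cycle_type_diag_map[OF l m] by simp
qed

lemma aut_cycle_type_if_jordan_basis:
  assumes g: "g \<in> iso (Zp2 p) (Zp2 p)" and v: "v \<in> plane p" and w: "w \<in> plane p"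
    and det: "\<not> int p dvd det2 v w"
    and gv: "g v = pscale p l v" and gw: "g w = padd p v (pscale p l w)"
  shows "aut_cycle_type p (cycle_lengths g (plane p))"
proof -
  have "v \<noteq> (0, 0)" using det by (auto simp: det2_def)
  then have l: "0 < l mod int p" "l mod int p < int p"
    using eigenvalue_mod_pos[OF g] v gv mod_in_range by auto
  have "g (lincomb p v w z) = lincomb p v w (jordan_map p (l mod int p) z)" for z
    using g v w gv gw by (intro lincomb_jordan_map) (simp_all add: hom_of_iso pscale_mod)
  then have "cycle_lengths g (plane p) = cycle_lengths (jordan_map p (l mod int p)) (plane p)"
    by (intro cycle_lengths_conj[OF finite_perm_iso[OF jordan_map_iso[OF l]] bij_lincomb[OF v w det]])
      simp
  then show ?thesis using aut_cycle_type_jordan_map[OF l] by simp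
qed

lemma aut_cycle_type_if_distinct_eigenvalues:
  assumes g: "g \<in> iso (Zp2 p) (Zp2 p)" and v: "v \<in> plane p" and w: "w \<in> plane p"
    and det: "\<not> int p dvd det2 v w"
    and gv: "g v = lincomb p v w (l, 0)" and gw: "g w = lincomb p v w (\<alpha>, \<mu>)"
    and distinct: "\<not> int p dvd \<mu> - l"
  shows "aut_cycle_type p (cycle_lengths g (plane p))"
proof -
  txt \<open>The shear \<open>w + \<alpha> / (\<mu> - l) v\<close> is an eigenvector for \<open>\<mu>\<close>.\<close>
  obtain i where i: "((\<mu> - l) * i) mod int p = 1" using ex_inverse_mod[OF distinct] by blast
  have "[\<alpha> * ((\<mu> - l) * i) = \<alpha> * 1] (mod int p)"
    using i p_gt_1 by (intro cong_mult cong_refl) (simp add: cong_def)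
  then have "[\<alpha> * ((\<mu> - l) * i) + \<alpha> * i * l = \<alpha> * 1 + \<alpha> * i * l] (mod int p)"
    by (rule cong_add) (rule cong_refl)
  then have "[\<alpha> + \<alpha> * i * l = \<mu> * (\<alpha> * i)] (mod int p)"
    by (simp add: algebra_simps cong_sym_eq)
  then have "g (lincomb p v w (\<alpha> * i, 1)) = pscale p \<mu> (lincomb p v w (\<alpha> * i, 1))"
    unfolding hom_lincomb[OF hom_of_iso[OF g] v w] gv gw by (rule eigenvector_of_shear)
  moreover have "\<not> int p dvd det2 v (lincomb p v w (\<alpha> * i, 1))"
    using det dvd_det2_lincomb_iff[of p v w "(1, 0)" "(\<alpha> * i, 1)"] lincomb_basis[OF v w] by simp
  moreover have "g v = pscale p l v" using gv pscale_eq_lincomb[OF v w] by simp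
  ultimately show ?thesis
    using aut_cycle_type_if_eigenbasis[OF g v lincomb_in_plane] by blast
qed

lemma aut_cycle_type_if_repeated_eigenvalue:
  assumes g: "g \<in> iso (Zp2 p) (Zp2 p)" and v: "v \<in> plane p" and w: "w \<in> plane p"
    and det: "\<not> int p dvd det2 v w"
    and gv: "g v = lincomb p v w (l, 0)" and gw: "g w = lincomb p v w (\<alpha>, l)"
    and \<alpha>: "\<not> int p dvd \<alpha>"
  shows "aut_cycle_type p (cycle_lengths g (plane p))"
proof -
  have v': "pscale p \<alpha> v = lincomb p v w (\<alpha>, 0)" using pscale_eq_lincomb[OF v w] by simp
  have "g (pscale p \<alpha> v) = pscale p l (pscale p \<alpha> v)"
    unfolding v' hom_lincomb[OF hom_of_iso[OF g] v w] gv gw pscale_lincomb lincomb_lincomb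
    by (simp add: mult.commute)
  moreover have "g w = padd p (pscale p \<alpha> v) (pscale p l w)"
    using gw by (simp add: lincomb_def)
  moreover have "\<not> int p dvd det2 (pscale p \<alpha> v) w"
    using det \<alpha> dvd_det2_lincomb_iff[of p v w "(\<alpha>, 0)" "(0, 1)"] lincomb_basis[OF v w]
    by (simp add: v' p_dvd_mult_iff)
  ultimately show ?thesis
    using aut_cycle_type_if_jordan_basis[OF g pscale_in_plane w] by blast
qed

lemma aut_cycle_type_if_eigenvector:
  assumes g: "g \<in> iso (Zp2 p) (Zp2 p)" and v: "v \<in> plane p" "v \<noteq> (0, 0)"
    and gv: "g v = pscale p c v"
  shows "aut_cycle_type p (cycle_lengths g (plane p))"
proof -
  define l where "l = c mod int p"
  have l: "0 < l" "l < int p" using eigenvalue_mod_pos[OF g v gv] mod_in_range by (simp_all add: l_def)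
  obtain w where w: "w \<in> plane p" and det: "\<not> int p dvd det2 v w" using ex_not_dvd_det2[OF v] .
  have gv_l: "g v = pscale p l v" using gv by (simp add: l_def pscale_mod)
  then have gv': "g v = lincomb p v w (l, 0)" using pscale_eq_lincomb[OF v(1) w] by simp
  obtain \<alpha> \<mu> where \<alpha>\<mu>: "0 \<le> \<alpha>" "\<alpha> < int p" "0 \<le> \<mu>" "\<mu> < int p" and gw: "g w = lincomb p v w (\<alpha>, \<mu>)"
  proof -
    have "g w \<in> lincomb p v w ` plane p"
      using bij_lincomb[OF v(1) w det] hom_in_plane[OF hom_of_iso[OF g] w] by (simp add: bij_betw_def)
    then show ?thesis using that by (auto simp: plane_def)
  qed
  consider (distinct) "\<mu> \<noteq> l" | (diagonal) "\<mu> = l" "\<alpha> = 0" | (jordan) "\<mu> = l" "\<alpha> \<noteq> 0" by blast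
  then show ?thesis
  proof cases
    case distinct
    then have "\<not> int p dvd \<mu> - l" using \<alpha>\<mu> l residue_eqI by auto
    then show ?thesis using aut_cycle_type_if_distinct_eigenvalues[OF g v(1) w det gv' gw] by blast
  next
    case diagonal
    then have "g w = pscale p \<mu> w" using gw pscale_eq_lincomb[OF v(1) w] by simp
    then show ?thesis using aut_cycle_type_if_eigenbasis[OF g v(1) w det gv_l] by blast
  next
    case jordan
    then have "\<not> int p dvd \<alpha>" using \<alpha>\<mu> residue_eq_0I by auto
    then show ?thesis using aut_cycle_type_if_repeated_eigenvalue[OF g v(1) w det gv'] gw jordan by simp
  qed
qed

lemma aut_cycle_type_if_no_eigenvector:
  assumes g: "g \<in> iso (Zp2 p) (Zp2 p)"
    and no_eigenvector: "\<And>v c. v \<in> plane p \<Longrightarrow> v \<noteq> (0, 0) \<Longrightarrow> g v \<noteq> pscale p c v"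
  shows "aut_cycle_type p (cycle_lengths g (plane p))"
proof -
  interpret finite_perm g "plane p" using finite_perm_iso[OF g] .
  have hom: "g \<in> hom (Zp2 p) (Zp2 p)" using hom_of_iso[OF g] .
  txt \<open>\<open>v\<close> and \<open>g v\<close> form a basis, so a power of \<open>g\<close> fixing \<open>v\<close> fixes everything.\<close>
  have fixes_all: "(g ^^ k) u = u"
    if v: "v \<in> plane p" "v \<noteq> (0, 0)" and fixed: "(g ^^ k) v = v" and u: "u \<in> plane p" for v u k
  proof -
    have gv: "g v \<in> plane p" using hom_in_plane[OF hom v(1)] .
    have det: "\<not> int p dvd det2 v (g v)"
      by (rule not_dvd_det2I[OF v gv]) (use no_eigenvector v in metis)
    obtain z where "u = lincomb p v (g v) z"
      using bij_lincomb[OF v(1) gv det] u by (metis bij_betw_imp_surj_on imageE)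
    moreover have "(g ^^ k) (g v) = g v" using fixed by (metis funpow_swap1)
    ultimately show ?thesis using hom_lincomb[OF funpow_hom[OF hom] v(1) gv] fixed by simp
  qed
  define v0 where "v0 = ((1::int), (0::int))"
  have v0: "v0 \<in> plane p" "v0 \<noteq> (0, 0)" using p_gt_1 by (simp_all add: v0_def plane_def)
  have cyc: "card (cycle_of g v) = period g v0" if v: "v \<in> plane p" "v \<noteq> (0, 0)" for v
  proof (rule card_cycle_ofI[OF v(1)])
    fix k
    show "(g ^^ k) v = v \<longleftrightarrow> period g v0 dvd k"
      using fixes_all[OF v] fixes_all[OF v0] v(1) v0(1) funpow_fixed_iff[OF v0(1)] by blast
  qed
  note fixing_zero = cycle_lengths_fixing_zero[OF finite_perm_iso[OF g] hom_zero[OF hom] cyc]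
  then show ?thesis unfolding aut_cycle_type_def using period_pos[OF v0(1)] by blast
qed

theorem aut_cycle_type_cycle_lengths:
  assumes "g \<in> iso (Zp2 p) (Zp2 p)"
  shows "aut_cycle_type p (cycle_lengths g (plane p))"
  using aut_cycle_type_if_eigenvector[OF assms] aut_cycle_type_if_no_eigenvector[OF assms] by blast

end

section \<open>A field with \<open>p\<^sup>2\<close> elements\<close>

text \<open>\<open>(a, b)\<close> stands for \<open>a + b y\<close> in \<open>Z_p[y] / (y\<^sup>2 - t y - s)\<close>.\<close>

definition quad_mult :: "nat \<Rightarrow> int \<Rightarrow> int \<Rightarrow> int \<times> int \<Rightarrow> int \<times> int \<Rightarrow> int \<times> int" where
  "quad_mult p s t u w = ((fst u * fst w + s * snd u * snd w) mod int p,
                         (fst u * snd w + snd u * fst w + t * snd u * snd w) mod int p)"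

definition quad_ring :: "nat \<Rightarrow> int \<Rightarrow> int \<Rightarrow> (int \<times> int) ring" where
  "quad_ring p s t = \<lparr>carrier = plane p, monoid.mult = quad_mult p s t, one = (1, 0),
     zero = (0, 0), add = padd p\<rparr>"

lemma quad_mult_assoc: "quad_mult p s t (quad_mult p s t u w) z = quad_mult p s t u (quad_mult p s t w z)"
proof -
  obtain u1 u2 w1 w2 z1 z2 where uwz: "u = (u1, u2)" "w = (w1, w2)" "z = (z1, z2)"
    by (cases u, cases w, cases z)
  let ?a = "u1 * w1 + s * u2 * w2" and ?b = "u1 * w2 + u2 * w1 + t * u2 * w2"
  let ?c = "w1 * z1 + s * w2 * z2" and ?d = "w1 * z2 + w2 * z1 + t * w2 * z2"
  have "[?a mod int p * z1 + s * (?b mod int p) * z2 = ?a * z1 + s * ?b * z2] (mod int p)"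
    "[?a mod int p * z2 + ?b mod int p * z1 + t * (?b mod int p) * z2
      = ?a * z2 + ?b * z1 + t * ?b * z2] (mod int p)"
    "[u1 * (?c mod int p) + s * u2 * (?d mod int p) = u1 * ?c + s * u2 * ?d] (mod int p)"
    "[u1 * (?d mod int p) + u2 * (?c mod int p) + t * u2 * (?d mod int p)
      = u1 * ?d + u2 * ?c + t * u2 * ?d] (mod int p)"
    by (intro cong_add cong_mult cong_refl; simp)+
  moreover have "?a * z1 + s * ?b * z2 = u1 * ?c + s * u2 * ?d"
    "?a * z2 + ?b * z1 + t * ?b * z2 = u1 * ?d + u2 * ?c + t * u2 * ?d"
    by (simp_all add: algebra_simps)
  ultimately show ?thesis by (simp add: uwz quad_mult_def cong_def)
qed

lemma quad_mult_comm: "quad_mult p s t u w = quad_mult p s t w u"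
  by (simp add: quad_mult_def algebra_simps)

lemma quad_mult_padd: "quad_mult p s t (padd p u w) z = padd p (quad_mult p s t u z) (quad_mult p s t w z)"
proof -
  obtain u1 u2 w1 w2 z1 z2 where uwz: "u = (u1, u2)" "w = (w1, w2)" "z = (z1, z2)"
    by (cases u, cases w, cases z)
  have "[(u1 + w1) mod int p * z1 + s * ((u2 + w2) mod int p) * z2
      = (u1 * z1 + s * u2 * z2) mod int p + (w1 * z1 + s * w2 * z2) mod int p] (mod int p)"
    "[(u1 + w1) mod int p * z2 + (u2 + w2) mod int p * z1 + t * ((u2 + w2) mod int p) * z2
      = (u1 * z2 + u2 * z1 + t * u2 * z2) mod int p + (w1 * z2 + w2 * z1 + t * w2 * z2) mod int p]
      (mod int p)"
  proof -
    have "[(u1 + w1) mod int p * z1 + s * ((u2 + w2) mod int p) * z2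
        = (u1 + w1) * z1 + s * (u2 + w2) * z2] (mod int p)"
      "[(u1 * z1 + s * u2 * z2) mod int p + (w1 * z1 + s * w2 * z2) mod int p
        = (u1 * z1 + s * u2 * z2) + (w1 * z1 + s * w2 * z2)] (mod int p)"
      "[(u1 + w1) mod int p * z2 + (u2 + w2) mod int p * z1 + t * ((u2 + w2) mod int p) * z2
        = (u1 + w1) * z2 + (u2 + w2) * z1 + t * (u2 + w2) * z2] (mod int p)"
      "[(u1 * z2 + u2 * z1 + t * u2 * z2) mod int p + (w1 * z2 + w2 * z1 + t * w2 * z2) mod int p
        = (u1 * z2 + u2 * z1 + t * u2 * z2) + (w1 * z2 + w2 * z1 + t * w2 * z2)] (mod int p)"
      by (intro cong_add cong_mult cong_refl; simp)+
    then show "[(u1 + w1) mod int p * z1 + s * ((u2 + w2) mod int p) * z2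
      = (u1 * z1 + s * u2 * z2) mod int p + (w1 * z1 + s * w2 * z2) mod int p] (mod int p)"
    "[(u1 + w1) mod int p * z2 + (u2 + w2) mod int p * z1 + t * ((u2 + w2) mod int p) * z2
      = (u1 * z2 + u2 * z1 + t * u2 * z2) mod int p + (w1 * z2 + w2 * z1 + t * w2 * z2) mod int p]
      (mod int p)"
      by (simp_all add: cong_def algebra_simps)
  qed
  then show ?thesis by (simp add: uwz quad_mult_def padd_def cong_def)
qed

lemma padd_assoc: "padd p (padd p u w) z = padd p u (padd p w z)"
  by (simp add: padd_def mod_simps add.assoc)

lemma padd_comm: "padd p u w = padd p w u"
  by (simp add: padd_def add.commute)

lemma (in field) ex_element_of_ord:
  assumes fin: "finite (carrier R)" and d: "d dvd order (mult_of R)"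
  obtains a where "a \<in> carrier (mult_of R)" "group.ord (mult_of R) a = d"
proof -
  interpret G: group "mult_of R" by (rule field_mult_group)
  have finG: "finite (carrier (mult_of R))" using fin by simp
  obtain \<gamma> where \<gamma>: "\<gamma> \<in> carrier (mult_of R)"
    and gen: "carrier (mult_of R) = {\<gamma> [^] i | i::nat. i \<in> UNIV}"
    using finite_field_mult_group_has_gen[OF fin] by blast
  have ord_\<gamma>: "G.ord \<gamma> = order (mult_of R)"
  proof (rule antisym)
    show "G.ord \<gamma> \<le> order (mult_of R)" using G.ord_le_group_order[OF finG \<gamma>] .
    have "carrier (mult_of R) = (\<lambda>i. \<gamma> [^] i) ` {0 .. G.ord \<gamma> - 1}"
      by (subst gen, subst G.ord_elems[OF finG \<gamma>, unfolded nat_pow_mult_of])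
        (simp only: setcompr_eq_image Collect_mem_eq)
    then have "order (mult_of R) = card ((\<lambda>i. \<gamma> [^] i) ` {0 .. G.ord \<gamma> - 1})"
      unfolding order_def by (rule arg_cong)
    also have "\<dots> \<le> card {0 .. G.ord \<gamma> - 1}" by (rule card_image_le) simp
    finally show "order (mult_of R) \<le> G.ord \<gamma>" using G.ord_ge_1[OF finG \<gamma>] by simp
  qed
  define k where "k = order (mult_of R) div d"
  have "\<one> \<in> carrier (mult_of R)" by simp
  then have "0 < order (mult_of R)" using finG unfolding order_def by (metis card_gt_0_iff empty_iff)
  then have k: "k * d = order (mult_of R)" "k \<noteq> 0" using d by (auto simp: k_def)
  have "k dvd G.ord \<gamma>" using k(1) ord_\<gamma> dvd_triv_left[of k d] by simp
  then have "G.ord (\<gamma> [^]\<^bsub>mult_of R\<^esub> k) = G.ord \<gamma> div k" by (rule G.ord_pow[OF \<gamma> _ k(2)])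
  also have "\<dots> = d" using k(2) ord_\<gamma> by (simp flip: k(1))
  finally show ?thesis using that G.nat_pow_closed[OF \<gamma>] by blast
qed

context mod_prime
begin

lemma quad_mult_in_plane: "quad_mult p s t u w \<in> plane p"
  by (simp add: quad_mult_def plane_def mod_in_range)

lemma quad_mult_1: "u \<in> plane p \<Longrightarrow> quad_mult p s t (1, 0) u = u"
  by (simp add: quad_mult_def prod_eq_iff plane_mod)

lemma ex_padd_inverse: "u \<in> plane p \<Longrightarrow> \<exists>y\<in>plane p. padd p y u = (0, 0)"
  by (rule bexI[of _ "((- fst u) mod int p, (- snd u) mod int p)"])
    (simp_all add: padd_def mod_simps plane_def mod_in_range)

lemma cring_quad_ring: "cring (quad_ring p s t)"
proof (rule cringI)
  show "abelian_group (quad_ring p s t)"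
  proof (rule abelian_groupI)
    show "x \<oplus>\<^bsub>quad_ring p s t\<^esub> y = y \<oplus>\<^bsub>quad_ring p s t\<^esub> x" for x y
      by (simp add: quad_ring_def padd_comm)
  qed (auto simp: quad_ring_def padd_assoc padd_0 ex_padd_inverse)
  show "comm_monoid (quad_ring p s t)"
    using p_gt_1
    by (intro comm_monoidI)
      (auto simp: quad_ring_def quad_mult_in_plane quad_mult_assoc quad_mult_1 mem_plane,
        simp add: quad_mult_comm)
qed (simp add: quad_ring_def quad_mult_padd)

lemma quad_norm_not_dvd:
  assumes irred: "\<And>y. \<not> int p dvd y^2 - t * y - s"
    and a: "(a1, a2) \<in> plane p" "(a1, a2) \<noteq> (0, 0)"
  shows "\<not> int p dvd a1 * (a1 + t * a2) - s * a2 * a2"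
proof
  assume N: "int p dvd a1 * (a1 + t * a2) - s * a2 * a2"
  have range: "0 \<le> a1" "a1 < int p" "0 \<le> a2" "a2 < int p" using a(1) by (simp_all add: mem_plane)
  show False
  proof (cases "a2 = 0")
    case True
    then have "\<not> int p dvd a1" using a range residue_eq_0I by auto
    then show False using N True by (simp add: p_dvd_mult_iff)
  next
    case False
    then have a2: "\<not> int p dvd a2" using range residue_eq_0I by auto
    then obtain i where i: "(a2 * i) mod int p = 1" using ex_inverse_mod by blast
    define y where "y = - a1 * i"
    have "[a2 * i = 1] (mod int p)" using i p_gt_1 by (simp add: cong_def)
    then have "[- a1 * (a2 * i) = - a1 * 1] (mod int p)" by (rule cong_scalar_left)
    then have q: "int p dvd a2 * y + a1"
      by (simp add: y_def cong_iff_dvd_diff algebra_simps)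
    have "a2 * a2 * (y^2 - t * y - s)
        = (a2 * y + a1) * (a2 * y + a1 - 2 * a1 - t * a2) + (a1 * (a1 + t * a2) - s * a2 * a2)"
      by (simp add: power2_eq_square algebra_simps)
    then have "int p dvd a2 * a2 * (y^2 - t * y - s)" using q N by simp
    then show False using irred a2 by (simp add: p_dvd_mult_iff)
  qed
qed

lemma quad_mult_eq_0:
  assumes irred: "\<And>y. \<not> int p dvd y^2 - t * y - s"
    and a: "a \<in> plane p" and z: "z \<in> plane p" and eq: "quad_mult p s t a z = (0, 0)"
  shows "a = (0, 0) \<or> z = (0, 0)"
proof (rule ccontr)
  assume "\<not> (a = (0, 0) \<or> z = (0, 0))"
  then have a0: "a \<noteq> (0, 0)" and z0: "z \<noteq> (0, 0)" by auto
  obtain a1 a2 z1 z2 where az: "a = (a1, a2)" "z = (z1, z2)" by (cases a, cases z)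
  define N where "N = a1 * (a1 + t * a2) - s * a2 * a2"
  have N: "\<not> int p dvd N" using quad_norm_not_dvd[OF irred] a a0 by (simp add: az N_def)
  have E1: "int p dvd a1 * z1 + s * a2 * z2" and E2: "int p dvd a1 * z2 + a2 * z1 + t * a2 * z2"
    using eq by (auto simp: az quad_mult_def dvd_eq_mod_eq_0)
  have "z1 * N = (a1 + t * a2) * (a1 * z1 + s * a2 * z2) - s * a2 * (a1 * z2 + a2 * z1 + t * a2 * z2)"
    "z2 * N = a1 * (a1 * z2 + a2 * z1 + t * a2 * z2) - a2 * (a1 * z1 + s * a2 * z2)"
    by (simp_all add: N_def algebra_simps)
  then have "int p dvd z1 * N" "int p dvd z2 * N" using E1 E2 by simp_all
  then have "int p dvd z1" "int p dvd z2" using N p_dvd_mult_iff by blast+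
  then have "z1 = 0" "z2 = 0" using z residue_eq_0I by (auto simp: az mem_plane)
  then show False using z0 az by simp
qed

lemma field_quad_ring:
  assumes irred: "\<And>y. \<not> int p dvd y^2 - t * y - s"
  shows "field (quad_ring p s t)"
proof -
  interpret cring "quad_ring p s t" by (rule cring_quad_ring)
  have dom: "domain (quad_ring p s t)"
  proof (rule domain.intro)
    show "domain_axioms (quad_ring p s t)"
      by (rule domain_axioms.intro) (auto simp: quad_ring_def dest: quad_mult_eq_0[OF irred])
  qed (rule cring_quad_ring)
  show ?thesis
  proof (rule field_intro2)
    show "\<zero>\<^bsub>quad_ring p s t\<^esub> \<noteq> \<one>\<^bsub>quad_ring p s t\<^esub>" by (simp add: quad_ring_def)
    fix x assume x: "x \<in> carrier (quad_ring p s t) - {\<zero>\<^bsub>quad_ring p s t\<^esub>}"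
    have "inj_on (\<lambda>z. x \<otimes>\<^bsub>quad_ring p s t\<^esub> z) (carrier (quad_ring p s t))"
      using domain.m_lcancel[OF dom] x by (auto simp: inj_on_def)
    then have "(\<lambda>z. x \<otimes>\<^bsub>quad_ring p s t\<^esub> z) ` carrier (quad_ring p s t) = carrier (quad_ring p s t)"
      using x by (intro endo_inj_surj) (auto simp: quad_ring_def quad_mult_in_plane)
    then obtain y where y: "y \<in> carrier (quad_ring p s t)" "x \<otimes>\<^bsub>quad_ring p s t\<^esub> y = \<one>\<^bsub>quad_ring p s t\<^esub>"
      by (metis one_closed imageE)
    moreover have "y \<otimes>\<^bsub>quad_ring p s t\<^esub> x = \<one>\<^bsub>quad_ring p s t\<^esub>"
      using x y m_comm by simp
    ultimately show "x \<in> Units (quad_ring p s t)" using x unfolding Units_def by blast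
  qed
qed

lemma ex_irreducible_quadratic: "\<exists>s t. \<forall>y. \<not> int p dvd y^2 - t * y - s"
proof (cases "p = 2")
  case True
  have "odd (y^2 - 1 * y - 1)" for y :: int
  proof -
    have "even (y * (y - 1))" by simp
    then show ?thesis by (simp add: power2_eq_square algebra_simps)
  qed
  then show ?thesis using True by (metis dvd_trans even_numeral of_nat_numeral)
next
  case False
  then have p3: "2 < p" using p_gt_1 by simp
  txt \<open>Squaring identifies \<open>1\<close> and \<open>p - 1\<close>, so some residue is not a square.\<close>
  define S where "S = {0..<int p}"
  define sq where "sq y = (y * y) mod int p" for y
  have "sq 1 = sq (int p - 1)"
  proof -
    have "(int p - 1) * (int p - 1) = 1 + int p * (int p - 2)" by (simp add: algebra_simps)
    then show ?thesis using p_gt_1 by (simp add: sq_def)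
  qed
  moreover have "1 \<in> S" "int p - 1 \<in> S" "(1::int) \<noteq> int p - 1" using p3 by (auto simp: S_def)
  ultimately have "\<not> inj_on sq S" unfolding inj_on_def by blast
  moreover have "sq ` S \<subseteq> S" using mod_in_range by (auto simp: sq_def S_def)
  ultimately have "sq ` S \<noteq> S" using eq_card_imp_inj_on[of S sq] by (auto simp: S_def)
  then obtain s where s: "s \<in> S" "s \<notin> sq ` S" using \<open>sq ` S \<subseteq> S\<close> by blast
  have "\<not> int p dvd y^2 - 0 * y - s" for y
  proof
    assume "int p dvd y^2 - 0 * y - s"
    then have "(y * y) mod int p = s mod int p" by (simp add: mod_eq_dvd_iff power2_eq_square)
    then have "sq (y mod int p) = s" using s(1) by (simp add: sq_def S_def mod_simps)
    moreover have "y mod int p \<in> S" using mod_in_range by (simp add: S_def)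
    ultimately show False using s(2) by blast
  qed
  then show ?thesis by blast
qed

end

section \<open>Realising the cycle types\<close>

context mod_prime
begin

lemma ex_aut_uniform_cycles:
  assumes d: "0 < d" "d dvd p^2 - 1"
  shows "\<exists>g \<in> iso (Zp2 p) (Zp2 p).
    cycle_lengths g (plane p) = replicate_mset ((p^2 - 1) div d) d + {#1#}"
proof -
  obtain s t where irred: "\<And>y. \<not> int p dvd y^2 - t * y - s" using ex_irreducible_quadratic by blast
  define K where "K = quad_ring p s t"
  interpret K: field K unfolding K_def by (rule field_quad_ring[OF irred])
  have K: "carrier K = plane p" "\<zero>\<^bsub>K\<^esub> = (0, 0)" "\<And>u w. u \<oplus>\<^bsub>K\<^esub> w = padd p u w"
    by (simp_all add: K_def quad_ring_def)
  have "order (mult_of K) = p^2 - 1"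
    using card_plane by (simp add: order_def K card_Diff_singleton)
  then obtain a where a: "a \<in> carrier (mult_of K)" "group.ord (mult_of K) a = d"
    using K.ex_element_of_ord d(2) K by (metis finite_plane)
  define g where "g z = a \<otimes>\<^bsub>K\<^esub> z" for z
  have aK: "a \<in> carrier K" "a \<noteq> \<zero>\<^bsub>K\<^esub>" using a(1) by simp_all
  have "g \<in> hom (Zp2 p) (Zp2 p)"
    by (rule hom_Zp2I) (simp_all add: g_def aK flip: K(1,3) add: K.r_distr)
  moreover have "inj_on g (plane p)"
    unfolding g_def inj_on_def using aK K(1) K.m_lcancel by blast
  ultimately have g: "g \<in> iso (Zp2 p) (Zp2 p)" by (rule iso_of_hom_inj)
  have funpow_g: "(g ^^ n) z = a [^]\<^bsub>K\<^esub> n \<otimes>\<^bsub>K\<^esub> z" if z: "z \<in> carrier K" for n z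
  proof (induction n)
    case (Suc n)
    then show ?case
      using K.m_assoc[of a "a [^]\<^bsub>K\<^esub> n" z] K.m_comm[of a "a [^]\<^bsub>K\<^esub> n"] by (simp add: g_def z aK)
  qed (simp add: z)
  have "card (cycle_of g v) = d" if v: "v \<in> plane p" "v \<noteq> (0, 0)" for v
  proof (rule finite_perm.card_cycle_ofI[OF finite_perm_iso[OF g] v(1)])
    fix n
    have vK: "v \<in> carrier K" "v \<noteq> \<zero>\<^bsub>K\<^esub>" using v K by simp_all
    have "(g ^^ n) v = v \<longleftrightarrow> a [^]\<^bsub>K\<^esub> n \<otimes>\<^bsub>K\<^esub> v = \<one>\<^bsub>K\<^esub> \<otimes>\<^bsub>K\<^esub> v"
      using funpow_g vK by simp
    also have "\<dots> \<longleftrightarrow> a [^]\<^bsub>K\<^esub> n = \<one>\<^bsub>K\<^esub>"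
      using K.m_rcancel[OF vK(2) vK(1)] aK by simp
    also have "\<dots> \<longleftrightarrow> d dvd n"
      using group.pow_eq_id[OF K.field_mult_group a(1), of n] a(2) by (simp add: nat_pow_mult_of)
    finally show "(g ^^ n) v = v \<longleftrightarrow> d dvd n" .
  qed
  then show ?thesis
    using cycle_lengths_fixing_zero(1)[OF finite_perm_iso[OF g] hom_zero[OF hom_of_iso[OF g]]] g
    by blast
qed

lemma ex_residue_of_ord:
  assumes "0 < d" "d dvd p - 1"
  obtains l where "0 < l" "l < int p" "ord p (nat l) = d"
proof -
  obtain x where "residue_primroot p x" using prime_primitive_root_exists[OF p_gt_1 prime] by blast
  then have ord_x: "ord p x = p - 1" and cop: "coprime p x"
    using totient_prime[OF prime] by (auto simp: residue_primroot_def)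
  define k where "k = (p - 1) div d"
  have k: "k dvd p - 1" "k * d = p - 1" using assms by (auto simp: k_def)
  have "k \<noteq> 0"
  proof
    assume "k = 0"
    with k(2) p_gt_1 show False by simp
  qed
  have "ord p (x ^ k mod p) = ord p x div gcd k (ord p x)" by (simp add: ord_power[OF cop])
  also have "\<dots> = (k * d) div k" using ord_x k by (simp add: gcd_nat.absorb1)
  also have "\<dots> = d" using \<open>k \<noteq> 0\<close> by simp
  finally have ord: "ord p (x ^ k mod p) = d" .
  have "\<not> p dvd x ^ k" using cop p_gt_1 coprime_common_divisor_nat[of p "x ^ k" p] by auto
  then have "0 < x ^ k mod p" "x ^ k mod p < p" using p_gt_1 by (simp_all add: dvd_eq_mod_eq_0 gr0I)
  then show ?thesis using ord by (intro that[of "int (x ^ k mod p)"]) simp_all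
qed

lemma ex_aut_of_cycle_type:
  assumes "aut_cycle_type p M"
  shows "\<exists>g \<in> iso (Zp2 p) (Zp2 p). cycle_lengths g (plane p) = M"
  using assms unfolding aut_cycle_type_def
proof (elim disjE exE conjE)
  fix d assume "0 < d" "d dvd p ^ 2 - 1" "M = replicate_mset ((p ^ 2 - 1) div d) d + {#1#}"
  then show ?thesis using ex_aut_uniform_cycles by blast
next
  fix d assume d: "0 < d" "d dvd p - 1"
    and M: "M = replicate_mset ((p - 1) div d) (p * d) + replicate_mset ((p - 1) div d) d + {#1#}"
  obtain l where l: "0 < l" "l < int p" "ord p (nat l) = d" using ex_residue_of_ord[OF d] .
  show ?thesis using jordan_map_iso[OF l(1,2)] cycle_lengths_jordan_map[OF l(1,2)] l(3) M by auto
next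
  fix d1 d2 assume d: "0 < d1" "0 < d2" "d1 dvd p - 1" "d2 dvd p - 1"
    and M: "M = replicate_mset ((p - 1) ^ 2 div lcm d1 d2) (lcm d1 d2)
      + replicate_mset ((p - 1) div d1) d1 + replicate_mset ((p - 1) div d2) d2 + {#1#}"
  obtain l where l: "0 < l" "l < int p" "ord p (nat l) = d1" using ex_residue_of_ord[OF d(1,3)] .
  obtain m where m: "0 < m" "m < int p" "ord p (nat m) = d2" using ex_residue_of_ord[OF d(2,4)] .
  show ?thesis
    using diag_map_iso[OF l(1,2) m(1,2)] cycle_lengths_diag_map[OF l(1,2) m(1,2)] l(3) m(3) M by auto
qed

lemma aut_cycle_type_iff:
  "aut_cycle_type p M \<longleftrightarrow> (\<exists>g \<in> iso (Zp2 p) (Zp2 p). cycle_lengths g (plane p) = M)"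
  using ex_aut_of_cycle_type aut_cycle_type_cycle_lengths by blast

lemma aut_cycle_type_all_fixed: "aut_cycle_type p (replicate_mset (p^2) 1)"
proof -
  obtain n where n: "p = Suc n" using p_gt_1 by (cases p) auto
  have "p^2 = (p - 1)^2 + (p - 1) + (p - 1) + 1" by (simp add: n power2_eq_square)
  then have "replicate_mset (p^2) (1::nat) = replicate_mset ((p - 1)^2 div lcm 1 1) (lcm 1 1)
      + replicate_mset ((p - 1) div 1) 1 + replicate_mset ((p - 1) div 1) 1 + {#1#}"
    by (simp add: multiset_eq_iff)
  then show ?thesis unfolding aut_cycle_type_def by (intro disjI2 exI[of _ "1::nat"]) simp
qed

end

theorem theorem2p5:
  fixes p :: nat and A :: "'a set" and f :: "'a \<Rightarrow> 'a"
  assumes "prime p" and "finite A" and "card A = p ^ 2" and "bij_betw f A A"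
  shows "(\<exists>op e. group (mk_group A op e)
                 \<and> mk_group A op e \<cong> (integer_mod_group p \<times>\<times> integer_mod_group p)
                 \<and> f \<in> iso (mk_group A op e) (mk_group A op e))
     \<longleftrightarrow> ((\<forall>x\<in>A. f x = x)
         \<or> (\<exists>d. 0 < d \<and> d dvd p ^ 2 - 1 \<and>
               cycle_lengths f A = replicate_mset ((p ^ 2 - 1) div d) d + {#1#})
         \<or> (\<exists>d. 0 < d \<and> d dvd p - 1 \<and>
               cycle_lengths f A = replicate_mset ((p - 1) div d) (p * d)
                                 + replicate_mset ((p - 1) div d) d + {#1#})
         \<or> (\<exists>d1 d2. 0 < d1 \<and> 0 < d2 \<and> d1 dvd p - 1 \<and> d2 dvd p - 1 \<and>
               cycle_lengths f A = replicate_mset ((p - 1) ^ 2 div lcm d1 d2) (lcm d1 d2)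
                                 + replicate_mset ((p - 1) div d1) d1
                                 + replicate_mset ((p - 1) div d2) d2 + {#1#}))"
proof -
  interpret mod_prime p using assms(1) by unfold_locales
  have fin: "finite (carrier (Zp2 p))" unfolding carrier_Zp2 by simp
  have "(\<exists>op e. group (mk_group A op e) \<and> mk_group A op e \<cong> Zp2 p
            \<and> f \<in> iso (mk_group A op e) (mk_group A op e))
      \<longleftrightarrow> (\<exists>g \<in> iso (Zp2 p) (Zp2 p). cycle_lengths g (carrier (Zp2 p)) = cycle_lengths f A)"
    by (rule ex_group_with_automorphism_iff[OF group_Zp2 fin assms(2,4)])
  also have "\<dots> \<longleftrightarrow> aut_cycle_type p (cycle_lengths f A)"
    unfolding carrier_Zp2 aut_cycle_type_iff ..
  also have "\<dots> \<longleftrightarrow> (\<forall>x\<in>A. f x = x) \<or> aut_cycle_type p (cycle_lengths f A)"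
    using finite_perm.cycle_lengths_id[of f A] assms(2-4) aut_cycle_type_all_fixed
    by (auto simp: finite_perm_def)
  finally show ?thesis unfolding aut_cycle_type_def .
qed


end
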